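(* In the setting below, the cokernel of $\bar\rho_{\mathfrak{ab}}\colon\bar G_{\mathfrak{ab}}\to\bar A_{\mathfrak{ab}}$ is free abelian.
   Context: Let $G$ be a group generated by $a_1,\dots,a_n$ with $z=a_1\cdots a_n$ central. Let $S_1,\dots,S_m\subseteq\{1,\dots,n\}$ with $|S_i\cap S_r|\le1$ for $i\neq r$. For $S\subseteq\{1,\dots,n\}$ let $G_S$ be the quotient of $G$ by the normal closure of $\{a_j:j\notin S\}$; let $a_{ij}$ be the image of $a_j$ in $G_{S_i}$ and $z_i=a_{i1}\cdots a_{in}$ (central in $G_{S_i}$). Let $\bar G=G/\langle z\rangle$, $\bar G_{S_i}=G_{S_i}/\langle z_i\rangle$, and assume each $\bar G_{S_i}$ is free of rank $|S_i|-1$, the images of any $|S_i|-1$ of the $a_{ij}$, $j\in S_i$, forming a free basis. Let $A=\prod_iG_{S_i}$, $\bar A=\prod_i\bar G_{S_i}$, $\rho\colon G\to A$ the product of projections and $\bar\rho\colon\bar G\to\bar A$ the induced map. Assume the abelianizations $G_{\mathfrak{ab}}$ and $A_{\mathfrak{ab}}$ are free abelian with bases the images of $a_1,\dots,a_n$ and of $a_{ij}$ ($1\le i\le m$, $j\in S_i$) respectively. The subscript $\mathfrak{ab}$ denotes abelianization of groups and homomorphisms. *)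

theory Defs
  imports "HOL-Algebra.Algebra"
begin

definition ordprod :: "('a, 'b) monoid_scheme \<Rightarrow> (nat \<Rightarrow> 'a) \<Rightarrow> nat \<Rightarrow> 'a" where
  "ordprod G a n = foldr (\<lambda>x y. x \<otimes>\<^bsub>G\<^esub> y) (map a [1..<Suc n]) \<one>\<^bsub>G\<^esub>"

definition normal_closure :: "('a, 'b) monoid_scheme \<Rightarrow> 'a set \<Rightarrow> 'a set" where
  "normal_closure G Xs =
     generate G (\<Union>g\<in>carrier G. \<Union>x\<in>Xs. {g \<otimes>\<^bsub>G\<^esub> x \<otimes>\<^bsub>G\<^esub> inv\<^bsub>G\<^esub> g})"

definition abelianization :: "('a, 'b) monoid_scheme \<Rightarrow> 'a set monoid" where
  "abelianization G = G Mod (derived G (carrier G))"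

definition ab_class :: "('a, 'b) monoid_scheme \<Rightarrow> 'a \<Rightarrow> 'a set" where
  "ab_class G x = derived G (carrier G) #>\<^bsub>G\<^esub> x"

(* Reduced words over an index set T: letters (j, True) = f j, (j, False) = inverse of f j. *)
definition reduced_word :: "'i set \<Rightarrow> ('i \<times> bool) list \<Rightarrow> bool" where
  "reduced_word T w \<longleftrightarrow> set (map fst w) \<subseteq> T \<and>
     (\<forall>k. Suc k < length w \<longrightarrow> \<not> (fst (w ! k) = fst (w ! Suc k) \<and> snd (w ! k) \<noteq> snd (w ! Suc k)))"

definition eval_word :: "('a, 'b) monoid_scheme \<Rightarrow> ('i \<Rightarrow> 'a) \<Rightarrow> ('i \<times> bool) list \<Rightarrow> 'a" where
  "eval_word G f w =
     foldr (\<lambda>l y. (if snd l then f (fst l) else inv\<^bsub>G\<^esub> (f (fst l))) \<otimes>\<^bsub>G\<^esub> y) w \<one>\<^bsub>G\<^esub>"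

definition free_basis :: "('a, 'b) monoid_scheme \<Rightarrow> ('i \<Rightarrow> 'a) \<Rightarrow> 'i set \<Rightarrow> bool" where
  "free_basis G f T \<longleftrightarrow> group G \<and> f ` T \<subseteq> carrier G \<and> inj_on f T \<and>
     generate G (f ` T) = carrier G \<and>
     (\<forall>w. reduced_word T w \<and> w \<noteq> [] \<longrightarrow> eval_word G f w \<noteq> \<one>\<^bsub>G\<^esub>)"

definition free_group_of_rank :: "('a, 'b) monoid_scheme \<Rightarrow> nat \<Rightarrow> bool" where
  "free_group_of_rank G r \<longleftrightarrow> (\<exists>B. card B = r \<and> finite B \<and> free_basis G id B)"

definition abelian_basis :: "('a, 'b) monoid_scheme \<Rightarrow> ('i \<Rightarrow> 'a) \<Rightarrow> 'i set \<Rightarrow> bool" where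
  "abelian_basis G f T \<longleftrightarrow> comm_group G \<and> finite T \<and> f ` T \<subseteq> carrier G \<and> inj_on f T \<and>
     generate G (f ` T) = carrier G \<and>
     (\<forall>k :: 'i \<Rightarrow> int. finprod G (\<lambda>j. f j [^]\<^bsub>G\<^esub> k j) T = \<one>\<^bsub>G\<^esub> \<longrightarrow> (\<forall>j\<in>T. k j = 0))"

definition free_abelian :: "('a, 'b) monoid_scheme \<Rightarrow> bool" where
  "free_abelian G \<longleftrightarrow> comm_group G \<and> (\<exists>B :: 'a set. G \<cong> free_Abelian_group B)"

definition GS :: "('a, 'b) monoid_scheme \<Rightarrow> (nat \<Rightarrow> 'a) \<Rightarrow> nat \<Rightarrow> nat set \<Rightarrow> 'a set monoid" where
  "GS G a n S = G Mod (normal_closure G (a ` ({1..n} - S)))"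

definition projS :: "('a, 'b) monoid_scheme \<Rightarrow> (nat \<Rightarrow> 'a) \<Rightarrow> nat \<Rightarrow> nat set \<Rightarrow> 'a \<Rightarrow> 'a set" where
  "projS G a n S x = normal_closure G (a ` ({1..n} - S)) #>\<^bsub>G\<^esub> x"

definition zS :: "('a, 'b) monoid_scheme \<Rightarrow> (nat \<Rightarrow> 'a) \<Rightarrow> nat \<Rightarrow> nat set \<Rightarrow> 'a set" where
  "zS G a n S = ordprod (GS G a n S) (\<lambda>j. projS G a n S (a j)) n"

definition barGS :: "('a, 'b) monoid_scheme \<Rightarrow> (nat \<Rightarrow> 'a) \<Rightarrow> nat \<Rightarrow> nat set \<Rightarrow> 'a set set monoid" where
  "barGS G a n S = GS G a n S Mod (generate (GS G a n S) {zS G a n S})"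

definition barprojS :: "('a, 'b) monoid_scheme \<Rightarrow> (nat \<Rightarrow> 'a) \<Rightarrow> nat \<Rightarrow> nat set \<Rightarrow> 'a set \<Rightarrow> 'a set set" where
  "barprojS G a n S y = generate (GS G a n S) {zS G a n S} #>\<^bsub>GS G a n S\<^esub> y"

definition barG :: "('a, 'b) monoid_scheme \<Rightarrow> (nat \<Rightarrow> 'a) \<Rightarrow> nat \<Rightarrow> 'a set monoid" where
  "barG G a n = G Mod (generate G {ordprod G a n})"

definition Aprod :: "('a, 'b) monoid_scheme \<Rightarrow> (nat \<Rightarrow> 'a) \<Rightarrow> nat \<Rightarrow> (nat \<Rightarrow> nat set) \<Rightarrow> nat
                     \<Rightarrow> (nat \<Rightarrow> 'a set) monoid" where
  "Aprod G a n S m = product_group {1..m} (\<lambda>i. GS G a n (S i))"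

definition barAprod :: "('a, 'b) monoid_scheme \<Rightarrow> (nat \<Rightarrow> 'a) \<Rightarrow> nat \<Rightarrow> (nat \<Rightarrow> nat set) \<Rightarrow> nat
                     \<Rightarrow> (nat \<Rightarrow> 'a set set) monoid" where
  "barAprod G a n S m = product_group {1..m} (\<lambda>i. barGS G a n (S i))"

definition aA :: "('a, 'b) monoid_scheme \<Rightarrow> (nat \<Rightarrow> 'a) \<Rightarrow> nat \<Rightarrow> (nat \<Rightarrow> nat set) \<Rightarrow> nat
                     \<Rightarrow> nat \<times> nat \<Rightarrow> (nat \<Rightarrow> 'a set)" where
  "aA G a n S m ij = (\<lambda>k\<in>{1..m}. if k = fst ij then projS G a n (S k) (a (snd ij))
                                  else \<one>\<^bsub>GS G a n (S k)\<^esub>)"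

(* \<bar>\<rho> : \<bar>G \<rightarrow> \<bar>A, induced by \<rho> = product of projections (computed on a representative) *)
definition rho_bar :: "('a, 'b) monoid_scheme \<Rightarrow> (nat \<Rightarrow> 'a) \<Rightarrow> nat \<Rightarrow> (nat \<Rightarrow> nat set) \<Rightarrow> nat
                     \<Rightarrow> 'a set \<Rightarrow> (nat \<Rightarrow> 'a set set)" where
  "rho_bar G a n S m C =
     (\<lambda>i\<in>{1..m}. barprojS G a n (S i) (projS G a n (S i) (SOME x. x \<in> C)))"

definition rho_bar_ab :: "('a, 'b) monoid_scheme \<Rightarrow> (nat \<Rightarrow> 'a) \<Rightarrow> nat \<Rightarrow> (nat \<Rightarrow> nat set) \<Rightarrow> nat
                     \<Rightarrow> 'a set set \<Rightarrow> (nat \<Rightarrow> 'a set set) set" where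
  "rho_bar_ab G a n S m D =
     ab_class (barAprod G a n S m) (rho_bar G a n S m (SOME C. C \<in> D))"

definition cokernel :: "('c, 'd) monoid_scheme \<Rightarrow> ('e, 'f) monoid_scheme \<Rightarrow> ('c \<Rightarrow> 'e) \<Rightarrow> 'e set monoid" where
  "cokernel H K f = K Mod (f ` carrier H)"

end

theory Submission
  imports Defs
begin

text \<open>The cokernel is the abelian group generated by the classes \<open>e i j\<close> of the \<open>a i j\<close>
  (\<open>j \<in> S i\<close>), subject to two families of relations: the product of the \<open>e i j\<close> over \<open>j\<close> is the
  class of \<open>z i\<close>, hence trivial, and the product over \<open>i\<close> is the class of the image of \<open>a j\<close>, hence
  trivial as well. These are exactly the relations defining the first cohomology of the bipartite
  graph with an edge \<open>(i, j)\<close> for each \<open>j \<in> S i\<close>, a free abelian group with basis the edges outside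
  a spanning forest. The relations already show that those edges generate; their independence is
  witnessed by the fundamental cycles, each of which is realised as a homomorphism to \<open>\<int>\<close> by means
  of the basis of the abelianization of \<open>G\<close>.\<close>

lemma FactGroup_hom_induced:
  assumes G: "group G" and N: "N \<lhd> G" and f: "f \<in> hom G H" and H: "group H"
    and kill: "\<And>x. x \<in> N \<Longrightarrow> f x = \<one>\<^bsub>H\<^esub>"
  obtains g where "g \<in> hom (G Mod N) H" "\<And>x. x \<in> carrier G \<Longrightarrow> g (N #>\<^bsub>G\<^esub> x) = f x"
proof -
  interpret G: group G by fact
  interpret H: group H by fact
  have sub: "subgroup N G" using N normal_imp_subgroup by blast
  have "f x = f y"
    if x: "x \<in> carrier G" and y: "y \<in> carrier G" and eq: "N #>\<^bsub>G\<^esub> x = N #>\<^bsub>G\<^esub> y" for x y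
  proof -
    have "y \<in> N #>\<^bsub>G\<^esub> x" using eq G.rcos_self[OF y sub] by simp
    then obtain k where k: "k \<in> N" "y = k \<otimes>\<^bsub>G\<^esub> x" unfolding r_coset_def by auto
    have "k \<in> carrier G" using k sub subgroup.subset by blast
    then have "f y = f k \<otimes>\<^bsub>H\<^esub> f x" using k x f by (simp add: hom_mult)
    also have "\<dots> = f x" using kill[OF k(1)] f x by (simp add: hom_in_carrier)
    finally show ?thesis by simp
  qed
  then show ?thesis using FactGroup_universal[OF f N] that by blast
qed

lemma hom_one_on_generate:
  assumes G: "group G" and H: "group H" and f: "f \<in> hom G H" and A: "A \<subseteq> carrier G"
    and kill: "\<And>x. x \<in> A \<Longrightarrow> f x = \<one>\<^bsub>H\<^esub>" and y: "y \<in> generate G A"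
  shows "f y = \<one>\<^bsub>H\<^esub>"
proof -
  interpret group_hom G H f using G H f by (simp add: group_hom_def group_hom_axioms_def)
  have "generate G A \<subseteq> kernel G H f"
    using A kill by (intro group.generate_subgroup_incl[OF G _ subgroup_kernel]) (auto simp: kernel_def)
  then show ?thesis using y by (auto simp: kernel_def)
qed

lemma normal_generate_central:
  assumes G: "group G" and c: "c \<in> carrier G"
    and central: "\<forall>g\<in>carrier G. c \<otimes>\<^bsub>G\<^esub> g = g \<otimes>\<^bsub>G\<^esub> c"
  shows "generate G {c} \<lhd> G"
proof -
  interpret group G by fact
  show ?thesis
  proof (rule normal_generateI)
    fix h g assume "h \<in> {c}" "g \<in> carrier G"
    then show "g \<otimes>\<^bsub>G\<^esub> h \<otimes>\<^bsub>G\<^esub> inv\<^bsub>G\<^esub> g \<in> {c}"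
      using central c by (simp add: m_assoc[symmetric]) (metis inv_closed m_assoc r_inv r_one)
  qed (use c in simp)
qed

lemma normal_closure_normal:
  assumes G: "group G" and Y: "Y \<subseteq> carrier G"
  shows "normal_closure G Y \<lhd> G"
proof -
  interpret group G by fact
  define C where "C = (\<Union>g\<in>carrier G. \<Union>x\<in>Y. {g \<otimes>\<^bsub>G\<^esub> x \<otimes>\<^bsub>G\<^esub> inv\<^bsub>G\<^esub> g})"
  show ?thesis unfolding normal_closure_def C_def[symmetric]
  proof (rule normal_generateI)
    fix h g assume "h \<in> C" and g: "g \<in> carrier G"
    then obtain g' x where gx: "g' \<in> carrier G" "x \<in> Y" "h = g' \<otimes>\<^bsub>G\<^esub> x \<otimes>\<^bsub>G\<^esub> inv\<^bsub>G\<^esub> g'"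
      by (auto simp: C_def)
    then have "g \<otimes>\<^bsub>G\<^esub> h \<otimes>\<^bsub>G\<^esub> inv\<^bsub>G\<^esub> g = (g \<otimes>\<^bsub>G\<^esub> g') \<otimes>\<^bsub>G\<^esub> x \<otimes>\<^bsub>G\<^esub> inv\<^bsub>G\<^esub> (g \<otimes>\<^bsub>G\<^esub> g')"
      using Y g by (auto simp: m_assoc inv_mult_group)
    then show "g \<otimes>\<^bsub>G\<^esub> h \<otimes>\<^bsub>G\<^esub> inv\<^bsub>G\<^esub> g \<in> C" using gx g by (auto simp: C_def)
  qed (use Y in \<open>auto simp: C_def\<close>)
qed

lemma normal_closure_incl:
  assumes G: "group G" and Y: "Y \<subseteq> carrier G"
  shows "Y \<subseteq> normal_closure G Y"
proof
  interpret group G by fact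
  fix x assume x: "x \<in> Y"
  moreover have "x = \<one>\<^bsub>G\<^esub> \<otimes>\<^bsub>G\<^esub> x \<otimes>\<^bsub>G\<^esub> inv\<^bsub>G\<^esub> \<one>\<^bsub>G\<^esub>" using x Y by auto
  ultimately have "x \<in> (\<Union>g\<in>carrier G. \<Union>x\<in>Y. {g \<otimes>\<^bsub>G\<^esub> x \<otimes>\<^bsub>G\<^esub> inv\<^bsub>G\<^esub> g})"
    by blast
  then show "x \<in> normal_closure G Y" unfolding normal_closure_def by (rule generate.incl)
qed

lemma hom_one_on_normal_closure:
  assumes G: "group G" and H: "group H" and f: "f \<in> hom G H" and Y: "Y \<subseteq> carrier G"
    and kill: "\<And>x. x \<in> Y \<Longrightarrow> f x = \<one>\<^bsub>H\<^esub>" and y: "y \<in> normal_closure G Y"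
  shows "f y = \<one>\<^bsub>H\<^esub>"
proof -
  interpret group_hom G H f using G H f by (simp add: group_hom_def group_hom_axioms_def)
  show ?thesis
  proof (rule hom_one_on_generate[OF G H f _ _ y[unfolded normal_closure_def]])
    fix c assume "c \<in> (\<Union>g\<in>carrier G. \<Union>x\<in>Y. {g \<otimes>\<^bsub>G\<^esub> x \<otimes>\<^bsub>G\<^esub> inv\<^bsub>G\<^esub> g})"
    then obtain g x where "g \<in> carrier G" "x \<in> Y" "c = g \<otimes>\<^bsub>G\<^esub> x \<otimes>\<^bsub>G\<^esub> inv\<^bsub>G\<^esub> g" by auto
    moreover have "x \<in> carrier G" using \<open>x \<in> Y\<close> Y by auto
    ultimately show "f c = \<one>\<^bsub>H\<^esub>" using kill by simp
  qed (use Y in auto)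
qed

lemma derived_subset_kernel:
  assumes G: "group G" and H: "comm_group H" and f: "f \<in> hom G H"
  shows "derived G (carrier G) \<subseteq> kernel G H f"
proof -
  interpret G: group G by fact
  interpret H: comm_group H by fact
  interpret group_hom G H f by unfold_locales (rule f)
  have "derived_set G (carrier G) \<subseteq> kernel G H f"
  proof
    fix y assume "y \<in> derived_set G (carrier G)"
    then obtain g h where gh: "g \<in> carrier G" "h \<in> carrier G"
      "y = g \<otimes>\<^bsub>G\<^esub> h \<otimes>\<^bsub>G\<^esub> inv\<^bsub>G\<^esub> g \<otimes>\<^bsub>G\<^esub> inv\<^bsub>G\<^esub> h" by blast
    then have "f y = f g \<otimes>\<^bsub>H\<^esub> f h \<otimes>\<^bsub>H\<^esub> inv\<^bsub>H\<^esub> (f g) \<otimes>\<^bsub>H\<^esub> inv\<^bsub>H\<^esub> (f h)" by simp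
    also have "\<dots> = \<one>\<^bsub>H\<^esub>"
      using gh by (metis H.inv_closed H.l_inv H.m_assoc H.m_closed H.m_comm H.r_inv H.r_one hom_closed)
    finally show "y \<in> kernel G H f" using gh by (simp add: kernel_def)
  qed
  then show ?thesis unfolding derived_def by (rule G.generate_subgroup_incl[OF _ subgroup_kernel])
qed

lemma abelianization_comm_group: "group G \<Longrightarrow> comm_group (abelianization G)"
  unfolding abelianization_def by (rule group.derived_quot_is_comm_group)

lemma ab_class_hom: "group G \<Longrightarrow> ab_class G \<in> hom G (abelianization G)"
  unfolding abelianization_def ab_class_def[abs_def]
  by (rule normal.r_coset_hom_Mod[OF group.derived_self_is_normal])

lemma carrier_abelianization: "carrier (abelianization G) = ab_class G ` carrier G"
  unfolding abelianization_def ab_class_def[abs_def] carrier_FactGroup ..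

lemma abelianization_hom_induced:
  assumes G: "group G" and H: "comm_group H" and f: "f \<in> hom G H"
  obtains g where "g \<in> hom (abelianization G) H" "\<And>x. x \<in> carrier G \<Longrightarrow> g (ab_class G x) = f x"
proof -
  have "f x = \<one>\<^bsub>H\<^esub>" if "x \<in> derived G (carrier G)" for x
    using derived_subset_kernel[OF G H f] that by (auto simp: kernel_def)
  from FactGroup_hom_induced[OF G group.derived_self_is_normal[OF G] f comm_group.axioms(2)[OF H] this]
  show ?thesis using that unfolding abelianization_def ab_class_def by blast
qed

lemma foldr_mult_closed:
  assumes "monoid G" "set xs \<subseteq> carrier G"
  shows "foldr (\<lambda>x y. x \<otimes>\<^bsub>G\<^esub> y) xs \<one>\<^bsub>G\<^esub> \<in> carrier G"
  using assms(2) by (induction xs) (auto simp: assms(1) monoid.m_closed monoid.one_closed)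

lemma foldr_mult_hom:
  assumes f: "f \<in> hom G H" and G: "group G" and H: "group H" and xs: "set xs \<subseteq> carrier G"
  shows "f (foldr (\<lambda>x y. x \<otimes>\<^bsub>G\<^esub> y) xs \<one>\<^bsub>G\<^esub>) = foldr (\<lambda>x y. x \<otimes>\<^bsub>H\<^esub> y) (map f xs) \<one>\<^bsub>H\<^esub>"
  using xs
proof (induction xs)
  case Nil then show ?case using f G H by (simp add: hom_one)
next
  case (Cons x xs)
  then show ?case
    using f foldr_mult_closed[OF group.is_monoid[OF G], of xs] by (simp add: hom_mult)
qed

lemma foldr_mult_eq_finprod:
  assumes H: "comm_monoid H" and "distinct xs" and "f ` set xs \<subseteq> carrier H"
  shows "foldr (\<lambda>x y. x \<otimes>\<^bsub>H\<^esub> y) (map f xs) \<one>\<^bsub>H\<^esub> = finprod H f (set xs)"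
  using assms(2,3)
proof (induction xs)
  case Nil then show ?case using H by (simp add: comm_monoid.finprod_empty)
next
  case (Cons x xs)
  then show ?case using H by (simp add: comm_monoid.finprod_insert Pi_iff image_subset_iff)
qed

lemma ordprod_closed:
  "monoid G \<Longrightarrow> a ` {1..n} \<subseteq> carrier G \<Longrightarrow> ordprod G a n \<in> carrier G"
  unfolding ordprod_def by (rule foldr_mult_closed) auto

lemma ordprod_hom:
  assumes "f \<in> hom G H" "group G" "group H" "a ` {1..n} \<subseteq> carrier G"
  shows "f (ordprod G a n) = ordprod H (f \<circ> a) n"
proof -
  have "set (map a [1..<Suc n]) \<subseteq> carrier G" using assms(4) by auto
  from foldr_mult_hom[OF assms(1-3) this] show ?thesis by (simp only: ordprod_def map_map)
qed

lemma ordprod_eq_finprod: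
  assumes "comm_monoid H" "a ` {1..n} \<subseteq> carrier H"
  shows "ordprod H a n = finprod H a {1..n}"
proof -
  have "set [1..<Suc n] = {1..n}" by auto
  then show ?thesis
    unfolding ordprod_def using foldr_mult_eq_finprod[OF assms(1), of "[1..<Suc n]" a] assms(2) by simp
qed

lemma finprod_integer_group: "finprod integer_group f A = sum f A"
proof (induction A rule: infinite_finite_induct)
  case (infinite A)
  then show ?case
    using comm_monoid.finprod_infinite[OF comm_group.axioms(1)[OF abelian_integer_group]] by simp
next
  case empty
  then show ?case using comm_monoid.finprod_empty[OF comm_group.axioms(1)[OF abelian_integer_group]]
    by simp
next
  case (insert x A)
  interpret comm_group integer_group by (rule abelian_integer_group)
  show ?case using insert by simp
qed

lemma hom_finprod:
  assumes K: "comm_group K" and Q: "comm_group Q" and h: "h \<in> hom K Q"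
    and f: "f \<in> A \<rightarrow> carrier K"
  shows "h (finprod K f A) = finprod Q (\<lambda>x. h (f x)) A"
proof -
  interpret K: comm_group K by fact
  interpret Q: comm_group Q by fact
  show ?thesis using f
  proof (induction A rule: infinite_finite_induct)
    case (insert x A)
    then show ?case using h by (simp add: hom_mult Pi_iff hom_in_carrier)
  qed (use h in \<open>simp_all add: hom_one\<close>)
qed

lemma finprod_int_pow:
  assumes Q: "comm_group Q" and f: "f \<in> A \<rightarrow> carrier Q"
  shows "finprod Q (\<lambda>x. f x [^]\<^bsub>Q\<^esub> (k::int)) A = finprod Q f A [^]\<^bsub>Q\<^esub> k"
proof -
  interpret comm_group Q by fact
  show ?thesis using f
    by (induction A rule: infinite_finite_induct) (auto simp: int_pow_distrib Pi_iff)
qed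

lemma finprod_in_subgroup:
  assumes Q: "comm_group Q" and M: "subgroup M Q" and f: "f \<in> A \<rightarrow> M"
  shows "finprod Q f A \<in> M"
proof -
  interpret comm_group Q by fact
  show ?thesis using f
  proof (induction A rule: infinite_finite_induct)
    case (insert x A)
    then have "f \<in> A \<rightarrow> carrier Q" "f x \<in> carrier Q" using subgroup.subset[OF M] by blast+
    then show ?case using insert by (simp add: subgroup.m_closed[OF M])
  qed (simp_all add: subgroup.one_closed[OF M])
qed

lemma hom_into_product_group:
  assumes "\<And>i. i \<in> I \<Longrightarrow> f i \<in> hom G (Gs i)"
  shows "(\<lambda>x. \<lambda>i\<in>I. f i x) \<in> hom G (product_group I Gs)"
  using assms by (auto simp: hom_def PiE_iff Pi_iff)

definition coord_embed :: "'i set \<Rightarrow> ('i \<Rightarrow> ('b, 'c) monoid_scheme) \<Rightarrow> 'i \<Rightarrow> 'b \<Rightarrow> ('i \<Rightarrow> 'b)" where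
  "coord_embed I Gs i y = (\<lambda>k\<in>I. if k = i then y else \<one>\<^bsub>Gs k\<^esub>)"

lemma coord_embed_hom:
  assumes gr: "\<And>k. k \<in> I \<Longrightarrow> group (Gs k)" and i: "i \<in> I"
  shows "coord_embed I Gs i \<in> hom (Gs i) (product_group I Gs)"
proof (rule homI)
  fix y assume "y \<in> carrier (Gs i)"
  then show "coord_embed I Gs i y \<in> carrier (product_group I Gs)"
    using gr by (auto simp: coord_embed_def group.is_monoid monoid.one_closed)
next
  fix x y assume "x \<in> carrier (Gs i)" "y \<in> carrier (Gs i)"
  then show "coord_embed I Gs i (x \<otimes>\<^bsub>Gs i\<^esub> y) =
      coord_embed I Gs i x \<otimes>\<^bsub>product_group I Gs\<^esub> coord_embed I Gs i y"
    using gr by (auto simp: coord_embed_def fun_eq_iff group.is_monoid monoid.l_one monoid.one_closed)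
qed

lemma hom_product_group_eq_finprod:
  assumes I: "finite I" and gr: "\<And>k. k \<in> I \<Longrightarrow> group (Gs k)" and K: "comm_group K"
    and phi: "phi \<in> hom (product_group I Gs) K" and y: "y \<in> carrier (product_group I Gs)"
  shows "phi y = finprod K (\<lambda>i. phi (coord_embed I Gs i (y i))) I"
proof -
  interpret K: comm_group K by fact
  have PG: "group (product_group I Gs)" using gr by simp
  have carr: "phi (coord_embed I Gs i (y i)) \<in> carrier K"
    if "i \<in> I" "y \<in> carrier (product_group I Gs)" for i y
    using hom_in_carrier[OF phi hom_in_carrier[OF coord_embed_hom[OF gr that(1)]]] that
    by (auto simp: PiE_iff)
  have "phi y = finprod K (\<lambda>i. phi (coord_embed I Gs i (y i))) J"
    if "finite J" "J \<subseteq> I" "y \<in> carrier (product_group I Gs)" "\<forall>i\<in>I - J. y i = \<one>\<^bsub>Gs i\<^esub>" for J y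
    using that
  proof (induction J arbitrary: y rule: finite_induct)
    case empty
    then have "y = \<one>\<^bsub>product_group I Gs\<^esub>" by (auto simp: PiE_iff fun_eq_iff extensional_def)
    then have "phi y = \<one>\<^bsub>K\<^esub>" using hom_one[OF phi PG K.is_group] by (simp only:)
    then show ?case by simp
  next
    case (insert j J)
    define y' where "y' = (\<lambda>k\<in>I. if k = j then \<one>\<^bsub>Gs k\<^esub> else y k)"
    have j: "j \<in> I" using insert by auto
    have y': "y' \<in> carrier (product_group I Gs)"
      using insert.prems gr by (auto simp: y'_def PiE_iff group.is_monoid)
    have "y = coord_embed I Gs j (y j) \<otimes>\<^bsub>product_group I Gs\<^esub> y'"
      using insert.prems gr j
      by (auto simp: y'_def coord_embed_def fun_eq_iff PiE_iff group.is_monoid extensional_def)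
    moreover have "coord_embed I Gs j (y j) \<in> carrier (product_group I Gs)"
      using insert.prems j by (intro hom_in_carrier[OF coord_embed_hom[OF gr j]]) (auto simp: PiE_iff)
    ultimately have "phi y = phi (coord_embed I Gs j (y j)) \<otimes>\<^bsub>K\<^esub> phi y'"
      using hom_mult[OF phi _ y'] by metis
    also have "phi y' = finprod K (\<lambda>i. phi (coord_embed I Gs i (y' i))) J"
      using insert y' by (auto simp: y'_def)
    also have "\<dots> = finprod K (\<lambda>i. phi (coord_embed I Gs i (y i))) J"
      using insert carr[OF _ insert.prems(2)] by (intro K.finprod_cong') (auto simp: y'_def)
    also have "phi (coord_embed I Gs j (y j)) \<otimes>\<^bsub>K\<^esub> \<dots> =
        finprod K (\<lambda>i. phi (coord_embed I Gs i (y i))) (insert j J)"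
      using insert carr[OF _ insert.prems(2)] by (subst K.finprod_insert) auto
    finally show ?case .
  qed
  then show ?thesis using I y by blast
qed

lemma sum_hom_product_group:
  assumes "\<And>i. i \<in> I \<Longrightarrow> om i \<in> hom (Gs i) integer_group"
  shows "(\<lambda>y. \<Sum>i\<in>I. om i (y i)) \<in> hom (product_group I Gs) integer_group"
proof (rule homI)
  fix x y assume "x \<in> carrier (product_group I Gs)" "y \<in> carrier (product_group I Gs)"
  then have "(\<Sum>i\<in>I. om i ((x \<otimes>\<^bsub>product_group I Gs\<^esub> y) i)) = (\<Sum>i\<in>I. om i (x i) + om i (y i))"
    using hom_mult[OF assms] by (intro sum.cong) (auto simp: PiE_iff)
  then show "(\<Sum>i\<in>I. om i ((x \<otimes>\<^bsub>product_group I Gs\<^esub> y) i)) =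
      (\<Sum>i\<in>I. om i (x i)) \<otimes>\<^bsub>integer_group\<^esub> (\<Sum>i\<in>I. om i (y i))"
    by (simp add: sum.distrib)
qed simp

lemma sum_hom_integer_group:
  assumes "\<And>i. i \<in> I \<Longrightarrow> f i \<in> hom G integer_group"
  shows "(\<lambda>x. \<Sum>i\<in>I. f i x) \<in> hom G integer_group"
proof (rule homI)
  fix x y assume "x \<in> carrier G" "y \<in> carrier G"
  then show "(\<Sum>i\<in>I. f i (x \<otimes>\<^bsub>G\<^esub> y)) = (\<Sum>i\<in>I. f i x) \<otimes>\<^bsub>integer_group\<^esub> (\<Sum>i\<in>I. f i y)"
    using hom_mult[OF assms] by (simp add: sum.distrib)
qed simp

definition free_Abelian_lift :: "('c, 'd) monoid_scheme \<Rightarrow> ('s \<Rightarrow> 'c) \<Rightarrow> 's set \<Rightarrow> ('s \<Rightarrow>\<^sub>0 int) \<Rightarrow> 'c" where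
  "free_Abelian_lift Q eps S x = finprod Q (\<lambda>s. eps s [^]\<^bsub>Q\<^esub> Poly_Mapping.lookup x s) S"

lemma free_Abelian_lift_hom:
  assumes Q: "comm_group Q" and eps: "eps ` S \<subseteq> carrier Q"
  shows "free_Abelian_lift Q eps S \<in> hom (free_Abelian_group S) Q"
proof -
  interpret comm_group Q by fact
  show ?thesis
  proof (rule homI)
    fix x y
    have "free_Abelian_lift Q eps S (x \<otimes>\<^bsub>free_Abelian_group S\<^esub> y) =
        finprod Q (\<lambda>s. eps s [^]\<^bsub>Q\<^esub> Poly_Mapping.lookup x s \<otimes>\<^bsub>Q\<^esub> eps s [^]\<^bsub>Q\<^esub> Poly_Mapping.lookup y s) S"
      unfolding free_Abelian_lift_def using eps by (intro finprod_cong') (auto simp: lookup_add int_pow_mult)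
    also have "\<dots> = free_Abelian_lift Q eps S x \<otimes>\<^bsub>Q\<^esub> free_Abelian_lift Q eps S y"
      unfolding free_Abelian_lift_def using eps by (intro finprod_multf) auto
    finally show "free_Abelian_lift Q eps S (x \<otimes>\<^bsub>free_Abelian_group S\<^esub> y) =
        free_Abelian_lift Q eps S x \<otimes>\<^bsub>Q\<^esub> free_Abelian_lift Q eps S y" .
  qed (use eps in \<open>auto simp: free_Abelian_lift_def intro!: finprod_closed\<close>)
qed

lemma free_Abelian_lift_frag_of:
  assumes Q: "comm_group Q" and eps: "eps ` S \<subseteq> carrier Q" and S: "finite S" and s: "s \<in> S"
  shows "free_Abelian_lift Q eps S (frag_of s) = eps s"
proof -
  interpret comm_group Q by fact
  have "free_Abelian_lift Q eps S (frag_of s) = finprod Q (\<lambda>j. if s = j then eps j else \<one>\<^bsub>Q\<^esub>) S"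
    unfolding free_Abelian_lift_def using eps by (intro finprod_cong') auto
  also have "\<dots> = eps s" using s S eps by (intro finprod_singleton) auto
  finally show ?thesis .
qed

lemma iso_free_Abelian_lift:
  assumes ab: "abelian_basis Q eps S"
  shows "free_Abelian_lift Q eps S \<in> iso (free_Abelian_group S) Q"
proof -
  have Q: "comm_group Q" and S: "finite S" and eps: "eps ` S \<subseteq> carrier Q"
    and gen: "generate Q (eps ` S) = carrier Q"
    using ab unfolding abelian_basis_def by auto
  interpret Q: comm_group Q by fact
  interpret h: group_hom "free_Abelian_group S" Q "free_Abelian_lift Q eps S"
    using free_Abelian_lift_hom[OF Q eps] by (simp add: group_hom_def group_hom_axioms_def)
  show ?thesis
  proof (subst h.iso_iff, intro conjI ballI impI)
    have "eps ` S \<subseteq> free_Abelian_lift Q eps S ` carrier (free_Abelian_group S)"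
      using free_Abelian_lift_frag_of[OF Q eps S] by (auto intro!: image_eqI[of _ _ "frag_of _"])
    then have "generate Q (eps ` S) \<subseteq> free_Abelian_lift Q eps S ` carrier (free_Abelian_group S)"
      by (intro Q.generate_subgroup_incl h.img_is_subgroup)
    then show "carrier Q \<subseteq> free_Abelian_lift Q eps S ` carrier (free_Abelian_group S)"
      using gen by simp
  next
    fix x assume x: "x \<in> carrier (free_Abelian_group S)" "free_Abelian_lift Q eps S x = \<one>\<^bsub>Q\<^esub>"
    then have "\<forall>j\<in>S. Poly_Mapping.lookup x j = 0"
      using ab unfolding abelian_basis_def free_Abelian_lift_def by blast
    moreover have "\<forall>j. j \<notin> S \<longrightarrow> Poly_Mapping.lookup x j = 0"
      using x by (auto simp: in_keys_iff)
    ultimately show "x = \<one>\<^bsub>free_Abelian_group S\<^esub>" by (auto intro!: poly_mapping_eqI)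
  qed
qed

lemma free_abelian_if_abelian_basis:
  assumes ab: "abelian_basis Q eps S"
  shows "free_abelian Q"
proof -
  have "inj_on eps S" "comm_group Q" using ab by (auto simp: abelian_basis_def)
  have "Q \<cong> free_Abelian_group S"
    using group.iso_sym[OF group_free_Abelian_group] iso_free_Abelian_lift[OF ab] is_isoI by blast
  also have "free_Abelian_group S \<cong> free_Abelian_group (eps ` S)"
    unfolding isomorphic_free_Abelian_groups
    using eqpoll_sym[OF inj_on_image_eqpoll_self[OF \<open>inj_on eps S\<close>]] .
  finally show ?thesis unfolding free_abelian_def using \<open>comm_group Q\<close> by blast
qed

lemma abelian_basis_dualI:
  assumes Q: "comm_group Q" and S: "finite S" and eps: "eps ` S \<subseteq> carrier Q"
    and gen: "generate Q (eps ` S) = carrier Q"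
    and dual: "\<And>b. b \<in> S \<Longrightarrow> \<exists>om \<in> hom Q integer_group. \<forall>s\<in>S. om (eps s) = (if s = b then 1 else 0)"
  shows "abelian_basis Q eps S"
proof -
  interpret comm_group Q by fact
  have coeff: "k b = 0" if b: "b \<in> S" and k: "finprod Q (\<lambda>s. eps s [^]\<^bsub>Q\<^esub> k s) S = \<one>\<^bsub>Q\<^esub>" for b and k :: "_ \<Rightarrow> int"
  proof -
    obtain om where om: "om \<in> hom Q integer_group" "\<forall>s\<in>S. om (eps s) = (if s = b then 1 else 0)"
      using dual[OF b] by blast
    have "0 = om (finprod Q (\<lambda>s. eps s [^]\<^bsub>Q\<^esub> k s) S)"
      using k hom_one[OF om(1) is_group group_integer_group] by simp
    also have "\<dots> = (\<Sum>s\<in>S. om (eps s [^]\<^bsub>Q\<^esub> k s))"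
      using eps by (subst hom_finprod[OF Q abelian_integer_group om(1)]) (auto simp: finprod_integer_group image_subset_iff)
    also have "\<dots> = (\<Sum>s\<in>S. if s = b then k s else 0)"
      using om eps hom_int_pow[OF om(1) _ is_group group_integer_group] by (intro sum.cong) auto
    also have "\<dots> = k b" using S b by simp
    finally show ?thesis by simp
  qed
  have "inj_on eps S"
  proof (rule inj_onI)
    fix b b' assume "b \<in> S" "b' \<in> S" "eps b = eps b'"
    moreover obtain om where "om \<in> hom Q integer_group" "\<forall>s\<in>S. om (eps s) = (if s = b then 1 else 0)"
      using dual[OF \<open>b \<in> S\<close>] by blast
    ultimately show "b = b'" by (metis zero_neq_one)
  qed
  then show ?thesis using Q S eps gen coeff by (auto simp: abelian_basis_def)
qed

lemma abelian_basis_hom_int: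
  assumes ab: "abelian_basis Q eps J"
  obtains g where "g \<in> hom Q integer_group" "\<And>j. j \<in> J \<Longrightarrow> g (eps j) = v j"
proof -
  have Q: "comm_group Q" and J: "finite J" and eps: "eps ` J \<subseteq> carrier Q"
    using ab unfolding abelian_basis_def by auto
  let ?lift = "free_Abelian_lift Q eps J"
  define inv_lift where "inv_lift = inv_into (carrier (free_Abelian_group J)) ?lift"
  have lift: "?lift \<in> iso (free_Abelian_group J) Q" by (rule iso_free_Abelian_lift[OF ab])
  then have "inv_lift \<in> iso Q (free_Abelian_group J)"
    unfolding inv_lift_def by (rule group.iso_set_sym[OF group_free_Abelian_group])
  then have inv_lift: "inv_lift \<in> hom Q (free_Abelian_group J)" by (simp add: iso_def)
  have "inv_lift (eps j) = frag_of j" if "j \<in> J" for j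
    unfolding inv_lift_def free_Abelian_lift_frag_of[OF Q eps J that, symmetric]
    using lift that by (intro inv_into_f_f) (auto simp: iso_iff)
  then show ?thesis
    using that[of "free_Abelian_lift integer_group v J \<circ> inv_lift"]
      hom_compose[OF inv_lift free_Abelian_lift_hom[OF abelian_integer_group]]
      free_Abelian_lift_frag_of[OF abelian_integer_group _ J]
    by simp
qed

section \<open>Cohomology of finite graphs\<close>

definition incidence :: "('e \<Rightarrow> 'v) \<Rightarrow> ('e \<Rightarrow> 'v) \<Rightarrow> 'v \<Rightarrow> 'e \<Rightarrow> int" where
  "incidence t h u f = (if t f = u then 1 else 0) - (if h f = u then 1 else 0)"

definition is_cycle :: "'e set \<Rightarrow> ('e \<Rightarrow> 'v) \<Rightarrow> ('e \<Rightarrow> 'v) \<Rightarrow> ('e \<Rightarrow> int) \<Rightarrow> bool" where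
  "is_cycle E t h w \<longleftrightarrow> (\<forall>u. (\<Sum>f\<in>E. w f * incidence t h u f) = 0)"

definition cohomologous_into :: "'e set \<Rightarrow> ('e \<Rightarrow> 'v) \<Rightarrow> ('e \<Rightarrow> 'v) \<Rightarrow> 'e set \<Rightarrow> ('e \<Rightarrow> int) \<Rightarrow> bool" where
  "cohomologous_into E t h B g \<longleftrightarrow>
     (\<exists>d (k :: 'v \<Rightarrow> int). (\<forall>f\<in>E - B. d f = 0) \<and> (\<forall>f\<in>E. g f = d f + (k (t f) - k (h f))))"

lemma cohomologous_into_supported: "(\<And>f. f \<in> E - B \<Longrightarrow> g f = 0) \<Longrightarrow> cohomologous_into E t h B g"
  unfolding cohomologous_into_def by (rule exI[of _ g], rule exI[of _ "\<lambda>_. 0"]) auto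

lemma cohomologous_into_coboundary: "cohomologous_into E t h B (\<lambda>f. k (t f) - k (h f))"
  unfolding cohomologous_into_def by (rule exI[of _ "\<lambda>_. 0"], rule exI[of _ k]) auto

lemma cohomologous_into_add:
  assumes "cohomologous_into E t h B g" "cohomologous_into E t h B g'"
  shows "cohomologous_into E t h B (\<lambda>f. g f + g' f)"
proof -
  obtain d k d' k' where "\<forall>f\<in>E - B. d f = 0" "\<forall>f\<in>E. g f = d f + (k (t f) - k (h f))"
    "\<forall>f\<in>E - B. d' f = 0" "\<forall>f\<in>E. g' f = d' f + (k' (t f) - k' (h f))"
    using assms unfolding cohomologous_into_def by blast
  then show ?thesis unfolding cohomologous_into_def
    by (intro exI[of _ "\<lambda>f. d f + d' f"] exI[of _ "\<lambda>v. k v + k' v"]) auto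
qed

lemma cohomologous_into_scale:
  assumes "cohomologous_into E t h B g"
  shows "cohomologous_into E t h B (\<lambda>f. c * g f)"
proof -
  obtain d k where d: "\<forall>f\<in>E - B. d f = 0" and g: "\<forall>f\<in>E. g f = d f + (k (t f) - k (h f))"
    using assms unfolding cohomologous_into_def by blast
  have "\<forall>f\<in>E - B. c * d f = 0" using d by simp
  moreover have "\<forall>f\<in>E. c * g f = c * d f + (c * k (t f) - c * k (h f))"
    using g by (simp add: right_diff_distrib distrib_left)
  ultimately show ?thesis unfolding cohomologous_into_def
    by (intro exI[of _ "\<lambda>f. c * d f"] exI[of _ "\<lambda>v. c * k v"] conjI)
qed

lemma cohomologous_into_sum:
  "(\<And>x. x \<in> A \<Longrightarrow> cohomologous_into E t h B (g x)) \<Longrightarrow> cohomologous_into E t h B (\<lambda>f. \<Sum>x\<in>A. g x f)"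
  by (induction A rule: infinite_finite_induct)
    (auto intro: cohomologous_into_supported cohomologous_into_add)

lemma cohomologous_into_cong:
  "cohomologous_into E t h B g \<Longrightarrow> (\<And>f. f \<in> E \<Longrightarrow> g f = g' f) \<Longrightarrow> cohomologous_into E t h B g'"
  unfolding cohomologous_into_def by auto

lemma cohomologous_into_insert:
  assumes "cohomologous_into E t h B g" "B \<subseteq> B'" "e \<in> B'"
  shows "cohomologous_into (insert e E) t h B' g"
proof -
  obtain d k where d: "\<forall>f\<in>E - B. d f = 0" and g: "\<forall>f\<in>E. g f = d f + (k (t f) - k (h f))"
    using assms(1) unfolding cohomologous_into_def by blast
  define d' where "d' f = (if f = e then g e - (k (t e) - k (h e)) else d f)" for f
  have "\<forall>f\<in>insert e E - B'. d' f = 0" "\<forall>f\<in>insert e E. g f = d' f + (k (t f) - k (h f))"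
    using d g assms(2,3) by (auto simp: d'_def)
  then show ?thesis unfolding cohomologous_into_def by blast
qed

text \<open>Below, a non-loop edge \<open>e\<close> is contracted by a map \<open>r\<close> on vertices identifying \<open>h e\<close> with
  \<open>t e\<close>; the following lemmas lift data from the contracted graph back to the original one.\<close>

lemma cohomologous_into_uncontract:
  assumes "cohomologous_into E (r \<circ> t) (r \<circ> h) B g" "r (t e) = r (h e)" "e \<notin> B" "g e = 0"
  shows "cohomologous_into (insert e E) t h B g"
proof -
  obtain d k where d: "\<forall>f\<in>E - B. d f = 0" and g: "\<forall>f\<in>E. g f = d f + (k (r (t f)) - k (r (h f)))"
    using assms(1) unfolding cohomologous_into_def by auto
  have "\<forall>f\<in>insert e E - B. (d(e := 0)) f = 0"
    "\<forall>f\<in>insert e E. g f = (d(e := 0)) f + ((k \<circ> r) (t f) - (k \<circ> r) (h f))"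
    using d g assms(2-4) by auto
  then show ?thesis unfolding cohomologous_into_def by blast
qed

lemma is_cycle_uncontract:
  assumes E: "finite E" "e \<notin> E" and non_loop: "t e \<noteq> h e"
    and r: "r = (\<lambda>x. if x = h e then t e else x)"
    and cyc: "is_cycle E (r \<circ> t) (r \<circ> h) w"
  shows "is_cycle (insert e E) t h (w(e := - (\<Sum>f\<in>E. w f * incidence t h (t e) f)))"
    (is "is_cycle _ _ _ ?w")
  unfolding is_cycle_def
proof
  fix u
  let ?S = "\<lambda>u. \<Sum>f\<in>E. w f * incidence t h u f"
  have "(\<Sum>f\<in>insert e E. ?w f * incidence t h u f) = ?w e * incidence t h u e + ?S u"
    using E by (auto intro!: sum.cong)
  also have "\<dots> = 0"
  proof -
    consider "u = t e" | "u = h e" | "u \<noteq> t e" "u \<noteq> h e" by blast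
    then show ?thesis
    proof cases
      case 1
      have "incidence t h (t e) e = 1" using non_loop by (simp add: incidence_def)
      then show ?thesis unfolding 1 by simp
    next
      case 2
      have split: "incidence (r \<circ> t) (r \<circ> h) (t e) f = incidence t h (t e) f + incidence t h (h e) f"
        for f using non_loop r by (auto simp: incidence_def)
      have "0 = (\<Sum>f\<in>E. w f * incidence (r \<circ> t) (r \<circ> h) (t e) f)"
        using cyc unfolding is_cycle_def by simp
      also have "\<dots> = ?S (t e) + ?S (h e)" by (simp only: split distrib_left sum.distrib)
      finally have "0 = ?S (t e) + ?S (h e)" .
      moreover have "incidence t h (h e) e = -1" using non_loop by (simp add: incidence_def)
      ultimately show ?thesis unfolding 2 by simp
    next
      case 3
      then have "incidence (r \<circ> t) (r \<circ> h) u f = incidence t h u f" for f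
        using r by (auto simp: incidence_def)
      then have "?S u = (\<Sum>f\<in>E. w f * incidence (r \<circ> t) (r \<circ> h) u f)" by simp
      also have "\<dots> = 0" using cyc by (simp add: is_cycle_def)
      finally have "?S u = 0" .
      moreover have "incidence t h u e = 0" using 3 by (simp add: incidence_def)
      ultimately show ?thesis by simp
    qed
  qed
  finally show "(\<Sum>f\<in>insert e E. ?w f * incidence t h u f) = 0" .
qed

text \<open>Once all other edges are settled, a non-loop edge \<open>e\<close> is too: on \<open>insert e E\<close>, its
  indicator is the coboundary of the indicator of \<open>t e\<close> minus a combination of the others.\<close>

lemma cohomologous_into_non_loop:
  assumes E: "finite E" "e \<notin> E" and non_loop: "t e \<noteq> h e"
    and others: "\<And>g. g \<in> E \<Longrightarrow> cohomologous_into (insert e E) t h B (\<lambda>f. if f = g then 1 else 0)"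
  shows "cohomologous_into (insert e E) t h B (\<lambda>f. if f = e then 1 else 0)"
proof -
  let ?chi = "\<lambda>x. if x = t e then 1 else 0 :: int"
  have "cohomologous_into (insert e E) t h B
      (\<lambda>f. (?chi (t f) - ?chi (h f)) + (\<Sum>g\<in>E. (- incidence t h (t e) g) * (if f = g then 1 else 0)))"
    by (intro cohomologous_into_add cohomologous_into_coboundary cohomologous_into_sum
        cohomologous_into_scale others)
  moreover have "(?chi (t f) - ?chi (h f)) + (\<Sum>g\<in>E. (- incidence t h (t e) g) * (if f = g then 1 else 0))
      = (if f = e then 1 else 0)" if "f \<in> insert e E" for f
  proof (cases "f = e")
    case True
    then show ?thesis using E non_loop by (simp add: sum.neutral)
  next
    case False
    then have "f \<in> E" using that by simp
    then show ?thesis using False E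
      by (simp add: if_distrib[of "\<lambda>x. _ * x"] sum.delta incidence_def cong: if_cong)
  qed
  ultimately show ?thesis by (rule cohomologous_into_cong)
qed

text \<open>\<open>B\<close> is the set of edges outside a spanning forest: modulo coboundaries every edge is a
  combination of edges in \<open>B\<close>, and \<open>w b\<close> is the fundamental cycle of \<open>b\<close>.\<close>

definition fundamental_cycles ::
    "'e set \<Rightarrow> ('e \<Rightarrow> 'v) \<Rightarrow> ('e \<Rightarrow> 'v) \<Rightarrow> 'e set \<Rightarrow> ('e \<Rightarrow> 'e \<Rightarrow> int) \<Rightarrow> bool" where
  "fundamental_cycles E t h B w \<longleftrightarrow> B \<subseteq> E \<and>
     (\<forall>e\<in>E. cohomologous_into E t h B (\<lambda>f. if f = e then 1 else 0)) \<and>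
     (\<forall>b\<in>B. is_cycle E t h (w b)) \<and> (\<forall>b\<in>B. \<forall>b'\<in>B. w b b' = (if b = b' then 1 else 0))"

lemma fundamental_cycles_insert_loop:
  assumes E: "finite E" "e \<notin> E" and loop: "t e = h e" and fc: "fundamental_cycles E t h B w"
  shows "fundamental_cycles (insert e E) t h (insert e B)
    (\<lambda>b. if b = e then (\<lambda>f. if f = e then 1 else 0) else (w b)(e := 0))" (is "fundamental_cycles _ _ _ _ ?w")
proof -
  have B: "B \<subseteq> E" and red: "\<forall>g\<in>E. cohomologous_into E t h B (\<lambda>f. if f = g then 1 else 0)"
    and cyc: "\<forall>b\<in>B. is_cycle E t h (w b)" and dual: "\<forall>b\<in>B. \<forall>b'\<in>B. w b b' = (if b = b' then 1 else 0)"
    using fc unfolding fundamental_cycles_def by auto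
  have "cohomologous_into (insert e E) t h (insert e B) (\<lambda>f. if f = g then 1 else 0)"
    if "g \<in> insert e E" for g
  proof (cases "g = e")
    case True
    then show ?thesis by (intro cohomologous_into_supported) auto
  next
    case False
    then show ?thesis using that red by (intro cohomologous_into_insert) auto
  qed
  moreover have "is_cycle (insert e E) t h (?w b)" if "b \<in> insert e B" for b
  proof (cases "b = e")
    case True
    then show ?thesis using E loop by (auto simp: is_cycle_def incidence_def intro!: sum.neutral)
  next
    case False
    then have "(\<Sum>f\<in>insert e E. ?w b f * incidence t h u f) = (\<Sum>f\<in>E. w b f * incidence t h u f)" for u
      using E by (auto intro!: sum.cong)
    then show ?thesis using cyc False that by (simp add: is_cycle_def)
  qed
  moreover have "?w b b' = (if b = b' then 1 else 0)" if "b \<in> insert e B" "b' \<in> insert e B" for b b'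
    using that dual B E by auto
  ultimately show ?thesis using B unfolding fundamental_cycles_def by blast
qed

lemma fundamental_cycles_insert_non_loop:
  assumes E: "finite E" "e \<notin> E" and non_loop: "t e \<noteq> h e"
    and r: "r = (\<lambda>x. if x = h e then t e else x)" and fc: "fundamental_cycles E (r \<circ> t) (r \<circ> h) B w"
  shows "fundamental_cycles (insert e E) t h B
    (\<lambda>b. (w b)(e := - (\<Sum>f\<in>E. w b f * incidence t h (t e) f)))" (is "fundamental_cycles _ _ _ _ ?w")
proof -
  have B: "B \<subseteq> E" and red: "\<forall>g\<in>E. cohomologous_into E (r \<circ> t) (r \<circ> h) B (\<lambda>f. if f = g then 1 else 0)"
    and cyc: "\<forall>b\<in>B. is_cycle E (r \<circ> t) (r \<circ> h) (w b)"
    and dual: "\<forall>b\<in>B. \<forall>b'\<in>B. w b b' = (if b = b' then 1 else 0)"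
    using fc unfolding fundamental_cycles_def by auto
  have "cohomologous_into (insert e E) t h B (\<lambda>f. if f = g then 1 else 0)" if "g \<in> E" for g
    using that red B E r by (intro cohomologous_into_uncontract[where r = r]) auto
  then have "cohomologous_into (insert e E) t h B (\<lambda>f. if f = g then 1 else 0)" if "g \<in> insert e E" for g
    using that cohomologous_into_non_loop[of E e t h B, OF E non_loop] by blast
  moreover have "is_cycle (insert e E) t h (?w b)" if "b \<in> B" for b
    using E non_loop r cyc that by (intro is_cycle_uncontract) auto
  moreover have "?w b b' = (if b = b' then 1 else 0)" if "b \<in> B" "b' \<in> B" for b b'
    using that dual B E by auto
  ultimately show ?thesis using B unfolding fundamental_cycles_def by blast
qed

lemma fundamental_cycles_exist: "finite E \<Longrightarrow> \<exists>B w. fundamental_cycles E t h B w"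
proof (induction E arbitrary: t h rule: finite_induct)
  case empty
  show ?case by (intro exI[of _ "{}"]) (simp add: fundamental_cycles_def)
next
  case (insert e E)
  show ?case
  proof (cases "t e = h e")
    case True
    obtain B w where "fundamental_cycles E t h B w" using insert.IH by blast
    then show ?thesis using fundamental_cycles_insert_loop[of E e t h, OF insert.hyps True] by blast
  next
    case False
    define r where "r x = (if x = h e then t e else x)" for x
    obtain B w where "fundamental_cycles E (r \<circ> t) (r \<circ> h) B w" using insert.IH by blast
    then show ?thesis
      using fundamental_cycles_insert_non_loop[of E e t h r, OF insert.hyps False] r_def by blast
  qed
qed

section \<open>Abelian groups presented by a bipartite graph\<close>

definition lincomb :: "('c, 'd) monoid_scheme \<Rightarrow> ('e \<Rightarrow> 'c) \<Rightarrow> 'e set \<Rightarrow> ('e \<Rightarrow> int) \<Rightarrow> 'c" where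
  "lincomb Q eps E v = finprod Q (\<lambda>f. eps f [^]\<^bsub>Q\<^esub> v f) E"

lemma lincomb_closed:
  assumes "comm_group Q" "eps ` E \<subseteq> carrier Q"
  shows "lincomb Q eps E v \<in> carrier Q"
proof -
  interpret comm_group Q by fact
  show ?thesis unfolding lincomb_def using assms(2) by (intro finprod_closed) auto
qed

lemma lincomb_add:
  assumes "comm_group Q" "eps ` E \<subseteq> carrier Q"
  shows "lincomb Q eps E (\<lambda>f. u f + v f) = lincomb Q eps E u \<otimes>\<^bsub>Q\<^esub> lincomb Q eps E v"
proof -
  interpret comm_group Q by fact
  have "lincomb Q eps E (\<lambda>f. u f + v f) =
      finprod Q (\<lambda>f. eps f [^]\<^bsub>Q\<^esub> u f \<otimes>\<^bsub>Q\<^esub> eps f [^]\<^bsub>Q\<^esub> v f) E"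
    unfolding lincomb_def using assms(2) by (intro finprod_cong') (auto simp: int_pow_mult)
  also have "\<dots> = lincomb Q eps E u \<otimes>\<^bsub>Q\<^esub> lincomb Q eps E v"
    unfolding lincomb_def using assms(2) by (intro finprod_multf) auto
  finally show ?thesis .
qed

lemma lincomb_cong:
  assumes "comm_group Q" "eps ` E \<subseteq> carrier Q" "\<And>f. f \<in> E \<Longrightarrow> u f = v f"
  shows "lincomb Q eps E u = lincomb Q eps E v"
proof -
  interpret comm_group Q by fact
  show ?thesis unfolding lincomb_def using assms(2,3) by (intro finprod_cong') auto
qed

lemma lincomb_indicator:
  assumes "comm_group Q" "eps ` E \<subseteq> carrier Q" "finite E" "e \<in> E"
  shows "lincomb Q eps E (\<lambda>f. if f = e then 1 else 0) = eps e"
proof -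
  interpret comm_group Q by fact
  have "lincomb Q eps E (\<lambda>f. if f = e then 1 else 0) = finprod Q (\<lambda>f. if e = f then eps f else \<one>\<^bsub>Q\<^esub>) E"
    unfolding lincomb_def using assms(2) by (intro finprod_cong') auto
  also have "\<dots> = eps e" using assms(2-4) by (intro finprod_singleton) auto
  finally show ?thesis .
qed

lemma lincomb_in_subgroup:
  assumes "comm_group Q" "eps ` E \<subseteq> carrier Q" "subgroup M Q" "\<And>f. f \<in> E \<Longrightarrow> v f \<noteq> 0 \<Longrightarrow> eps f \<in> M"
  shows "lincomb Q eps E v \<in> M"
  unfolding lincomb_def
proof (rule finprod_in_subgroup[OF assms(1,3)], rule Pi_I)
  fix f assume "f \<in> E"
  then show "eps f [^]\<^bsub>Q\<^esub> v f \<in> M"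
    using assms group.subgroup_int_pow_closed[OF comm_group.axioms(2)[OF assms(1)] assms(3)]
    by (cases "v f = 0") (auto simp: subgroup.one_closed)
qed

lemma lincomb_fibrewise_one:
  assumes Q: "comm_group Q" and eps: "eps ` E \<subseteq> carrier Q" and E: "finite E"
    and fibre: "\<And>u. finprod Q eps {f\<in>E. t f = u} = \<one>\<^bsub>Q\<^esub>"
  shows "lincomb Q eps E (\<lambda>f. k (t f)) = \<one>\<^bsub>Q\<^esub>"
proof -
  interpret comm_group Q by fact
  have "lincomb Q eps E (\<lambda>f. k (t f)) = finprod Q (\<lambda>f. eps f [^]\<^bsub>Q\<^esub> k (t f)) (\<Union>u\<in>t ` E. {f\<in>E. t f = u})"
    unfolding lincomb_def by (rule arg_cong[where f = "finprod Q _"]) auto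
  also have "\<dots> = finprod Q (\<lambda>u. finprod Q (\<lambda>f. eps f [^]\<^bsub>Q\<^esub> k (t f)) {f\<in>E. t f = u}) (t ` E)"
    using E eps by (intro finprod_UN_disjoint) (auto simp: pairwise_def disjnt_def)
  also have "\<dots> = finprod Q (\<lambda>u. finprod Q eps {f\<in>E. t f = u} [^]\<^bsub>Q\<^esub> k u) (t ` E)"
  proof (intro finprod_cong')
    fix u
    have "finprod Q (\<lambda>f. eps f [^]\<^bsub>Q\<^esub> k (t f)) {f\<in>E. t f = u} =
        finprod Q (\<lambda>f. eps f [^]\<^bsub>Q\<^esub> k u) {f\<in>E. t f = u}"
      using eps by (intro finprod_cong') auto
    also have "\<dots> = finprod Q eps {f\<in>E. t f = u} [^]\<^bsub>Q\<^esub> k u"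
      using eps by (intro finprod_int_pow[OF Q]) auto
    finally show "finprod Q (\<lambda>f. eps f [^]\<^bsub>Q\<^esub> k (t f)) {f\<in>E. t f = u} =
        finprod Q eps {f\<in>E. t f = u} [^]\<^bsub>Q\<^esub> k u" .
  qed (use fibre in auto)
  also have "\<dots> = \<one>\<^bsub>Q\<^esub>" using fibre by simp
  finally show ?thesis .
qed

text \<open>The fibre relations make coboundaries act trivially.\<close>

lemma generator_in_generate_cohomologous:
  assumes Q: "comm_group Q" and eps: "eps ` E \<subseteq> carrier Q" and E: "finite E" and e: "e \<in> E"
    and tails: "\<And>u. finprod Q eps {f\<in>E. t f = u} = \<one>\<^bsub>Q\<^esub>"
    and heads: "\<And>u. finprod Q eps {f\<in>E. h f = u} = \<one>\<^bsub>Q\<^esub>"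
    and coh: "cohomologous_into E t h B (\<lambda>f. if f = e then 1 else 0)"
  shows "eps e \<in> generate Q (eps ` (E \<inter> B))"
proof -
  interpret comm_group Q by fact
  from coh obtain d k where d: "\<forall>f\<in>E - B. d f = 0"
    and dk: "\<forall>f\<in>E. (if f = e then 1 else 0) = d f + (k (t f) - k (h f) :: int)"
    unfolding cohomologous_into_def by auto
  have tails_one: "lincomb Q eps E (\<lambda>f. k (t f)) = \<one>\<^bsub>Q\<^esub>"
    by (rule lincomb_fibrewise_one[OF Q eps E tails])
  have heads_one: "lincomb Q eps E (\<lambda>f. - k (h f)) = \<one>\<^bsub>Q\<^esub>"
    by (rule lincomb_fibrewise_one[OF Q eps E heads])
  have "eps e = lincomb Q eps E (\<lambda>f. d f + (k (t f) + - k (h f)))"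
    unfolding lincomb_indicator[OF Q eps E e, symmetric] using dk by (intro lincomb_cong[OF Q eps]) simp
  also have "\<dots> = lincomb Q eps E d \<otimes>\<^bsub>Q\<^esub>
      (lincomb Q eps E (\<lambda>f. k (t f)) \<otimes>\<^bsub>Q\<^esub> lincomb Q eps E (\<lambda>f. - k (h f)))"
    by (simp only: lincomb_add[OF Q eps])
  also have "\<dots> = lincomb Q eps E d"
    unfolding tails_one heads_one using lincomb_closed[OF Q eps] by simp
  also have "\<dots> \<in> generate Q (eps ` (E \<inter> B))"
    using d eps by (intro lincomb_in_subgroup[OF Q eps] generate_is_subgroup) (auto intro: generate.incl)
  finally show ?thesis .
qed

lemma is_cycle_bipartite_iff:
  assumes "finite E"
  shows "is_cycle E (Inl \<circ> fst) (Inr \<circ> snd) w \<longleftrightarrow>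
     (\<forall>i. (\<Sum>e\<in>{e\<in>E. fst e = i}. w e) = 0) \<and> (\<forall>j. (\<Sum>e\<in>{e\<in>E. snd e = j}. w e) = 0)"
proof -
  have "(\<Sum>f\<in>E. w f * incidence (Inl \<circ> fst) (Inr \<circ> snd) (Inl i) f) = (\<Sum>e\<in>{e\<in>E. fst e = i}. w e)" for i
    using assms by (simp add: incidence_def sum.inter_filter if_distrib[of "\<lambda>x. _ * x"] cong: if_cong)
  moreover have "(\<Sum>f\<in>E. w f * incidence (Inl \<circ> fst) (Inr \<circ> snd) (Inr j) f) = - (\<Sum>e\<in>{e\<in>E. snd e = j}. w e)" for j
    using assms by (simp add: incidence_def sum.inter_filter if_distrib[of "\<lambda>x. _ * x"] sum_negf cong: if_cong)
  ultimately show ?thesis unfolding is_cycle_def by (subst split_sum_all) simp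
qed

text \<open>A basis is given by the edges outside a spanning forest; the fundamental cycles, realised as
  homomorphisms to the integers, witness its independence.\<close>

lemma free_abelian_bipartite_presentation:
  assumes Q: "comm_group Q" and E: "finite E" and eps: "eps ` E \<subseteq> carrier Q"
    and gen: "generate Q (eps ` E) = carrier Q"
    and rows: "\<And>i. finprod Q eps {e\<in>E. fst e = i} = \<one>\<^bsub>Q\<^esub>"
    and cols: "\<And>j. finprod Q eps {e\<in>E. snd e = j} = \<one>\<^bsub>Q\<^esub>"
    and flows: "\<And>w. (\<And>i. (\<Sum>e\<in>{e\<in>E. fst e = i}. w e) = 0) \<Longrightarrow> (\<And>j. (\<Sum>e\<in>{e\<in>E. snd e = j}. w e) = 0) \<Longrightarrow>
        \<exists>om \<in> hom Q integer_group. \<forall>e\<in>E. om (eps e) = w e"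
  shows "free_abelian Q"
proof -
  interpret comm_group Q by fact
  let ?t = "Inl \<circ> fst" and ?h = "Inr \<circ> snd"
  obtain B w where "fundamental_cycles E ?t ?h B w" using fundamental_cycles_exist[OF E] by blast
  then have B: "B \<subseteq> E"
    and coh: "\<forall>e\<in>E. cohomologous_into E ?t ?h B (\<lambda>f. if f = e then 1 else 0)"
    and cyc: "\<forall>b\<in>B. is_cycle E ?t ?h (w b)" and dual: "\<forall>b\<in>B. \<forall>b'\<in>B. w b b' = (if b = b' then 1 else 0)"
    unfolding fundamental_cycles_def by auto
  have epsB: "eps ` B \<subseteq> carrier Q" using eps B by blast
  have "eps e \<in> generate Q (eps ` B)" if "e \<in> E" for e
  proof -
    have "{f\<in>E. ?t f = u} = (case u of Inl i \<Rightarrow> {f\<in>E. fst f = i} | Inr j \<Rightarrow> {})"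
      "{f\<in>E. ?h f = u} = (case u of Inl i \<Rightarrow> {} | Inr j \<Rightarrow> {f\<in>E. snd f = j})" for u :: "_ + _"
      by (auto split: sum.split)
    then have "eps e \<in> generate Q (eps ` (E \<inter> B))"
      using rows cols coh that by (intro generator_in_generate_cohomologous[OF Q eps E]) (auto split: sum.split)
    then show ?thesis using Int_absorb1[OF B] by simp
  qed
  then have "carrier Q \<subseteq> generate Q (eps ` B)"
    unfolding gen[symmetric] using epsB by (intro generate_subgroup_incl generate_is_subgroup) auto
  then have "generate Q (eps ` B) = carrier Q" using epsB by (intro equalityI generate_incl)
  moreover have "\<exists>om \<in> hom Q integer_group. \<forall>s\<in>B. om (eps s) = (if s = b then 1 else 0)" if "b \<in> B" for b
  proof -
    have "is_cycle E ?t ?h (w b)" using cyc that by blast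
    then have "\<And>i. (\<Sum>e\<in>{e\<in>E. fst e = i}. w b e) = 0" "\<And>j. (\<Sum>e\<in>{e\<in>E. snd e = j}. w b e) = 0"
      unfolding is_cycle_bipartite_iff[OF E] by auto
    then obtain om where om: "om \<in> hom Q integer_group" "\<forall>e\<in>E. om (eps e) = w b e"
      using flows by blast
    show ?thesis using om dual that B by (intro bexI[of _ om]) auto
  qed
  ultimately have "abelian_basis Q eps B"
    using B E epsB by (intro abelian_basis_dualI[OF Q]) (auto intro: finite_subset)
  then show ?thesis by (rule free_abelian_if_abelian_basis)
qed

lemma some_rcos_representative:
  assumes G: "group G" and H: "subgroup H G" and C: "C \<in> rcosets\<^bsub>G\<^esub> H"
  shows "(SOME x. x \<in> C) \<in> carrier G" "C = H #>\<^bsub>G\<^esub> (SOME x. x \<in> C)"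
proof -
  interpret group G by fact
  obtain x0 where x0: "x0 \<in> carrier G" "C = H #>\<^bsub>G\<^esub> x0" using C unfolding RCOSETS_def by blast
  then have "x0 \<in> C" using rcos_self[OF x0(1) H] by simp
  then have "(SOME x. x \<in> C) \<in> C" by (rule someI)
  then show "C = H #>\<^bsub>G\<^esub> (SOME x. x \<in> C)" "(SOME x. x \<in> C) \<in> carrier G"
    using x0 repr_independence[OF _ x0(1) H] r_coset_subset_G[OF subgroup.subset[OF H] x0(1)] by auto
qed

lemma image_via_representatives:
  assumes G: "group G" and N: "N \<lhd> G" and H: "comm_group H" and f: "f \<in> hom G H"
    and kill: "\<And>x. x \<in> N \<Longrightarrow> f x = \<one>\<^bsub>H\<^esub>"
  shows "(\<lambda>D. f (SOME x. x \<in> (SOME C. C \<in> D))) ` carrier (abelianization (G Mod N)) = f ` carrier G"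
proof -
  interpret G: group G by fact
  have GN: "group (G Mod N)" using N normal.factorgroup_is_group by blast
  interpret GN: group "G Mod N" by (rule GN)
  obtain f1 where f1: "f1 \<in> hom (G Mod N) H" "\<And>x. x \<in> carrier G \<Longrightarrow> f1 (N #>\<^bsub>G\<^esub> x) = f x"
    using FactGroup_hom_induced[OF G N f comm_group.axioms(2)[OF H] kill] by blast
  obtain f2 where f2: "f2 \<in> hom (abelianization (G Mod N)) H"
    "\<And>C. C \<in> carrier (G Mod N) \<Longrightarrow> f2 (ab_class (G Mod N) C) = f1 C"
    using abelianization_hom_induced[OF GN H f1(1)] by blast
  have rep: "f (SOME x. x \<in> (SOME C. C \<in> D)) = f2 D" if D: "D \<in> carrier (abelianization (G Mod N))" for D
  proof -
    let ?C = "SOME C. C \<in> D" and ?der = "derived (G Mod N) (carrier (G Mod N))"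
    have der: "subgroup ?der (G Mod N)" by (rule GN.derived_is_subgroup) simp
    have "D \<in> rcosets\<^bsub>G Mod N\<^esub> ?der" using D by (simp add: abelianization_def FactGroup_def)
    then have C: "?C \<in> carrier (G Mod N)" "D = ab_class (G Mod N) ?C"
      using some_rcos_representative[OF GN der] unfolding ab_class_def by auto
    have N': "subgroup N G" using N normal_imp_subgroup by blast
    have "?C \<in> rcosets\<^bsub>G\<^esub> N" using C(1) by (simp add: FactGroup_def)
    then have x: "(SOME x. x \<in> ?C) \<in> carrier G" "?C = N #>\<^bsub>G\<^esub> (SOME x. x \<in> ?C)"
      using some_rcos_representative[OF G N'] by auto
    have "f2 D = f1 ?C" using f2(2)[OF C(1)] C(2) by metis
    also have "\<dots> = f (SOME x. x \<in> ?C)" using f1(2)[OF x(1)] x(2) by metis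
    finally show ?thesis by simp
  qed
  have "(\<lambda>D. f (SOME x. x \<in> (SOME C. C \<in> D))) ` carrier (abelianization (G Mod N)) =
      f2 ` carrier (abelianization (G Mod N))"
    using rep by (rule image_cong[OF refl])
  also have "\<dots> = f2 ` ab_class (G Mod N) ` (\<lambda>x. N #>\<^bsub>G\<^esub> x) ` carrier G"
    unfolding carrier_abelianization carrier_FactGroup ..
  also have "\<dots> = f ` carrier G"
    using f1(2) f2(2) by (force simp: image_image carrier_FactGroup intro!: image_cong)
  finally show ?thesis .
qed

locale product_cokernel =
  fixes G :: "('a, 'b) monoid_scheme" and I :: "'i set"
    and H :: "'i \<Rightarrow> ('c, 'd) monoid_scheme" and q :: "'i \<Rightarrow> 'a \<Rightarrow> 'c"
  assumes grp: "group G" and fin: "finite I" and H_grp: "\<And>i. i \<in> I \<Longrightarrow> group (H i)"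
    and q_hom: "\<And>i. i \<in> I \<Longrightarrow> q i \<in> hom G (H i)"
    and q_surj: "\<And>i. i \<in> I \<Longrightarrow> q i ` carrier G = carrier (H i)"
begin

abbreviation P where "P \<equiv> product_group I H"

definition diag :: "'a \<Rightarrow> ('i \<Rightarrow> 'c) set" where
  "diag x = ab_class P (\<lambda>i\<in>I. q i x)"

definition cok :: "('i \<Rightarrow> 'c) set set monoid" where
  "cok = abelianization P Mod (diag ` carrier G)"

definition to_cok :: "('i \<Rightarrow> 'c) set \<Rightarrow> ('i \<Rightarrow> 'c) set set" where
  "to_cok k = diag ` carrier G #>\<^bsub>abelianization P\<^esub> k"

definition coord :: "'i \<Rightarrow> 'a \<Rightarrow> ('i \<Rightarrow> 'c) set set" where
  "coord i x = to_cok (ab_class P (coord_embed I H i (q i x)))"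

lemma P_group: "group P"
  using H_grp by simp

lemma abP_comm_group: "comm_group (abelianization P)"
  by (rule abelianization_comm_group[OF P_group])

lemma diag_hom: "diag \<in> hom G (abelianization P)"
  unfolding diag_def[abs_def]
  using hom_compose[OF hom_into_product_group[OF q_hom] ab_class_hom[OF P_group]] by (simp add: o_def)

lemma diag_image_subgroup: "subgroup (diag ` carrier G) (abelianization P)"
proof -
  interpret group_hom G "abelianization P" diag
    using grp abP_comm_group diag_hom by (simp add: group_hom_def group_hom_axioms_def comm_group.axioms(2))
  show ?thesis by (rule img_is_subgroup)
qed

lemma cok_comm_group: "comm_group cok"
  unfolding cok_def by (rule comm_group.abelian_FactGroup[OF abP_comm_group diag_image_subgroup])

lemma cok_group: "group cok"
  using cok_comm_group comm_group.axioms(2) by blast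

lemma diag_image_normal: "diag ` carrier G \<lhd> abelianization P"
  using comm_group.normal_iff_subgroup[OF abP_comm_group] diag_image_subgroup by blast

lemma to_cok_hom: "to_cok \<in> hom (abelianization P) cok"
  unfolding to_cok_def[abs_def] cok_def by (rule normal.r_coset_hom_Mod[OF diag_image_normal])

lemma to_cok_diag: "x \<in> carrier G \<Longrightarrow> to_cok (diag x) = \<one>\<^bsub>cok\<^esub>"
  using subgroup.rcos_const[OF diag_image_subgroup comm_group.axioms(2)[OF abP_comm_group]]
  by (simp add: to_cok_def cok_def)

lemma ab_class_coord_embed_hom: "i \<in> I \<Longrightarrow> ab_class P \<circ> coord_embed I H i \<in> hom (H i) (abelianization P)"
  using hom_compose[OF coord_embed_hom[OF H_grp] ab_class_hom[OF P_group]] .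

lemma ab_class_coord_embed_carrier:
  "i \<in> I \<Longrightarrow> y \<in> carrier (H i) \<Longrightarrow> ab_class P (coord_embed I H i y) \<in> carrier (abelianization P)"
  using hom_in_carrier[OF ab_class_coord_embed_hom] by (simp add: o_def)

lemma coord_hom: "i \<in> I \<Longrightarrow> coord i \<in> hom G cok"
  unfolding coord_def[abs_def]
  using hom_compose[OF hom_compose[OF q_hom ab_class_coord_embed_hom] to_cok_hom] by (simp add: o_def)

lemma coord_eq_one:
  assumes "i \<in> I" "q i x = \<one>\<^bsub>H i\<^esub>"
  shows "coord i x = \<one>\<^bsub>cok\<^esub>"
  unfolding coord_def assms(2)
  using hom_one[OF ab_class_coord_embed_hom[OF assms(1)] H_grp[OF assms(1)] comm_group.axioms(2)[OF abP_comm_group]]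
    hom_one[OF to_cok_hom comm_group.axioms(2)[OF abP_comm_group] cok_group]
  by simp

lemma finprod_coord: "x \<in> carrier G \<Longrightarrow> finprod cok (\<lambda>i. coord i x) I = \<one>\<^bsub>cok\<^esub>"
proof -
  assume x: "x \<in> carrier G"
  have qx: "(\<lambda>i\<in>I. q i x) \<in> carrier P" using hom_in_carrier[OF q_hom x] by auto
  have "\<one>\<^bsub>cok\<^esub> = to_cok (diag x)" using to_cok_diag[OF x] by simp
  also have "diag x = finprod (abelianization P) (\<lambda>i. ab_class P (coord_embed I H i ((\<lambda>i\<in>I. q i x) i))) I"
    unfolding diag_def by (rule hom_product_group_eq_finprod[OF fin H_grp abP_comm_group ab_class_hom[OF P_group] qx])
  also have "\<dots> = finprod (abelianization P) (\<lambda>i. ab_class P (coord_embed I H i (q i x))) I"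
    using ab_class_coord_embed_carrier hom_in_carrier[OF q_hom x]
    by (intro comm_monoid.finprod_cong'[OF comm_group.axioms(1)[OF abP_comm_group]]) auto
  also have "to_cok \<dots> = finprod cok (\<lambda>i. coord i x) I"
    unfolding coord_def using ab_class_coord_embed_carrier hom_in_carrier[OF q_hom x]
    by (intro hom_finprod[OF abP_comm_group cok_comm_group to_cok_hom]) auto
  finally show ?thesis by simp
qed

lemma carrier_cok_generate: "carrier cok \<subseteq> generate cok (\<Union>i\<in>I. coord i ` carrier G)"
proof
  interpret cok: comm_group cok by (rule cok_comm_group)
  fix y assume "y \<in> carrier cok"
  then obtain yy where yy: "yy \<in> carrier P" "y = to_cok (ab_class P yy)"
    unfolding cok_def to_cok_def carrier_FactGroup carrier_abelianization by auto
  let ?gen = "generate cok (\<Union>i\<in>I. coord i ` carrier G)"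
  have gens: "(\<Union>i\<in>I. coord i ` carrier G) \<subseteq> carrier cok" using hom_in_carrier[OF coord_hom] by blast
  have "y = (to_cok \<circ> ab_class P) yy" using yy by simp
  also have "\<dots> = finprod cok (\<lambda>i. (to_cok \<circ> ab_class P) (coord_embed I H i (yy i))) I"
    using hom_product_group_eq_finprod[OF fin H_grp cok_comm_group
        hom_compose[OF ab_class_hom[OF P_group] to_cok_hom] yy(1)] .
  also have "\<dots> \<in> ?gen"
  proof (rule finprod_in_subgroup[OF cok_comm_group cok.generate_is_subgroup[OF gens]], rule Pi_I)
    fix i assume i: "i \<in> I"
    then obtain x where "x \<in> carrier G" "yy i = q i x" using yy(1) q_surj[OF i] by (force simp: PiE_iff)
    then show "(to_cok \<circ> ab_class P) (coord_embed I H i (yy i)) \<in> ?gen"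
      using i by (auto simp: coord_def intro!: generate.incl)
  qed
  finally show "y \<in> ?gen" .
qed

lemma cok_hom_to_integers:
  assumes chi: "\<And>i. i \<in> I \<Longrightarrow> chi i \<in> hom (H i) integer_group"
    and balanced: "\<And>x. x \<in> carrier G \<Longrightarrow> (\<Sum>i\<in>I. chi i (q i x)) = 0"
  obtains om where "om \<in> hom cok integer_group"
    "\<And>i x. i \<in> I \<Longrightarrow> x \<in> carrier G \<Longrightarrow> om (coord i x) = chi i (q i x)"
proof -
  have "(\<lambda>y. \<Sum>i\<in>I. chi i (y i)) \<in> hom P integer_group" by (rule sum_hom_product_group[OF chi])
  then obtain om1 where om1: "om1 \<in> hom (abelianization P) integer_group"
    "\<And>y. y \<in> carrier P \<Longrightarrow> om1 (ab_class P y) = (\<Sum>i\<in>I. chi i (y i))"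
    by (rule abelianization_hom_induced[OF P_group abelian_integer_group]) blast
  have kill: "om1 k = \<one>\<^bsub>integer_group\<^esub>" if "k \<in> diag ` carrier G" for k
    using that om1(2) balanced hom_in_carrier[OF q_hom] by (auto simp: diag_def)
  obtain om where om: "om \<in> hom cok integer_group"
    "\<And>k. k \<in> carrier (abelianization P) \<Longrightarrow> om (to_cok k) = om1 k"
    using FactGroup_hom_induced[OF comm_group.axioms(2)[OF abP_comm_group] diag_image_normal om1(1)
          group_integer_group kill]
    unfolding cok_def to_cok_def by blast
  have "om (coord i x) = chi i (q i x)" if i: "i \<in> I" and x: "x \<in> carrier G" for i x
  proof -
    have qx: "q i x \<in> carrier (H i)" using hom_in_carrier[OF q_hom[OF i] x] .
    have "om (coord i x) = (\<Sum>i'\<in>I. chi i' (coord_embed I H i (q i x) i'))"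
      unfolding coord_def using om(2) om1(2) hom_in_carrier[OF coord_embed_hom[of I H, OF H_grp i] qx]
        hom_in_carrier[OF ab_class_hom[OF P_group]] by simp
    also have "\<dots> = (\<Sum>i'\<in>I. if i' = i then chi i (q i x) else 0)"
      using hom_one[OF chi H_grp group_integer_group] by (intro sum.cong) (auto simp: coord_embed_def)
    also have "\<dots> = chi i (q i x)" using fin i by simp
    finally show ?thesis .
  qed
  then show ?thesis using that om(1) by blast
qed

end

section \<open>The groups \<open>barGS\<close> and the cokernel\<close>

locale central_word =
  fixes G :: "('a, 'b) monoid_scheme" and a :: "nat \<Rightarrow> 'a" and n :: nat
  assumes grp: "group G"
    and a_carr: "a ` {1..n} \<subseteq> carrier G"
    and z_central: "\<forall>g\<in>carrier G. ordprod G a n \<otimes>\<^bsub>G\<^esub> g = g \<otimes>\<^bsub>G\<^esub> ordprod G a n"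
begin

lemma z_carrier: "ordprod G a n \<in> carrier G"
  using ordprod_closed[OF group.is_monoid[OF grp] a_carr] .

lemma kernel_GS_normal: "normal_closure G (a ` ({1..n} - T)) \<lhd> G"
  using a_carr by (intro normal_closure_normal[OF grp]) auto

lemma GS_group: "group (GS G a n T)"
  unfolding GS_def using kernel_GS_normal normal.factorgroup_is_group by blast

lemma projS_hom: "projS G a n T \<in> hom G (GS G a n T)"
  unfolding GS_def projS_def[abs_def] by (rule normal.r_coset_hom_Mod[OF kernel_GS_normal])

lemma carrier_GS: "carrier (GS G a n T) = projS G a n T ` carrier G"
  unfolding GS_def projS_def[abs_def] carrier_FactGroup ..

lemma projS_outside:
  assumes "j \<in> {1..n}" "j \<notin> T"
  shows "projS G a n T (a j) = \<one>\<^bsub>GS G a n T\<^esub>"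
proof -
  have sub: "a ` ({1..n} - T) \<subseteq> carrier G" using a_carr by auto
  have "a j \<in> a ` ({1..n} - T)" using assms by simp
  then have "a j \<in> normal_closure G (a ` ({1..n} - T))"
    by (rule subsetD[OF normal_closure_incl[OF grp sub]])
  then show ?thesis
    unfolding projS_def GS_def
    using subgroup.rcos_const[OF normal_imp_subgroup[OF kernel_GS_normal] grp] by simp
qed

lemma zS_eq: "zS G a n T = projS G a n T (ordprod G a n)"
  unfolding zS_def using ordprod_hom[OF projS_hom grp GS_group a_carr] by (simp add: o_def)

lemma kernel_barGS_normal: "generate (GS G a n T) {zS G a n T} \<lhd> GS G a n T"
proof (rule normal_generate_central[OF GS_group])
  show "zS G a n T \<in> carrier (GS G a n T)"
    unfolding zS_eq using hom_in_carrier[OF projS_hom z_carrier] .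
  show "\<forall>g\<in>carrier (GS G a n T). zS G a n T \<otimes>\<^bsub>GS G a n T\<^esub> g = g \<otimes>\<^bsub>GS G a n T\<^esub> zS G a n T"
  proof
    fix g assume "g \<in> carrier (GS G a n T)"
    then obtain x where x: "x \<in> carrier G" "g = projS G a n T x" unfolding carrier_GS by blast
    have "zS G a n T \<otimes>\<^bsub>GS G a n T\<^esub> g = projS G a n T (ordprod G a n \<otimes>\<^bsub>G\<^esub> x)"
      unfolding zS_eq x(2) using hom_mult[OF projS_hom z_carrier x(1)] by simp
    also have "\<dots> = projS G a n T (x \<otimes>\<^bsub>G\<^esub> ordprod G a n)" using z_central x(1) by simp
    also have "\<dots> = g \<otimes>\<^bsub>GS G a n T\<^esub> zS G a n T"
      unfolding zS_eq x(2) using hom_mult[OF projS_hom x(1) z_carrier] by simp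
    finally show "zS G a n T \<otimes>\<^bsub>GS G a n T\<^esub> g = g \<otimes>\<^bsub>GS G a n T\<^esub> zS G a n T" .
  qed
qed

lemma barGS_group: "group (barGS G a n T)"
  unfolding barGS_def using kernel_barGS_normal normal.factorgroup_is_group by blast

definition proj_bar :: "nat set \<Rightarrow> 'a \<Rightarrow> 'a set set" where
  "proj_bar T x = barprojS G a n T (projS G a n T x)"

lemma barprojS_hom: "barprojS G a n T \<in> hom (GS G a n T) (barGS G a n T)"
  unfolding barGS_def barprojS_def[abs_def] by (rule normal.r_coset_hom_Mod[OF kernel_barGS_normal])

lemma proj_bar_hom: "proj_bar T \<in> hom G (barGS G a n T)"
  unfolding proj_bar_def[abs_def] using hom_compose[OF projS_hom barprojS_hom] by (simp add: o_def)

lemma proj_bar_surj: "proj_bar T ` carrier G = carrier (barGS G a n T)"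
  unfolding barGS_def carrier_FactGroup carrier_GS proj_bar_def barprojS_def by (simp add: image_image)

lemma proj_bar_outside: "j \<in> {1..n} \<Longrightarrow> j \<notin> T \<Longrightarrow> proj_bar T (a j) = \<one>\<^bsub>barGS G a n T\<^esub>"
  unfolding proj_bar_def by (simp add: projS_outside hom_one[OF barprojS_hom GS_group barGS_group])

lemma proj_bar_z: "proj_bar T (ordprod G a n) = \<one>\<^bsub>barGS G a n T\<^esub>"
proof -
  have "zS G a n T \<in> generate (GS G a n T) {zS G a n T}" by (rule generate.incl) simp
  then show ?thesis unfolding proj_bar_def zS_eq[symmetric] barprojS_def barGS_def
    using subgroup.rcos_const[OF normal_imp_subgroup[OF kernel_barGS_normal] GS_group] by simp
qed

lemma barGS_hom_induced:
  assumes K: "group K" and g: "g \<in> hom G K"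
    and outside: "\<And>j. j \<in> {1..n} \<Longrightarrow> j \<notin> T \<Longrightarrow> g (a j) = \<one>\<^bsub>K\<^esub>"
    and z: "g (ordprod G a n) = \<one>\<^bsub>K\<^esub>"
  obtains h where "h \<in> hom (barGS G a n T) K" "\<And>x. x \<in> carrier G \<Longrightarrow> h (proj_bar T x) = g x"
proof -
  have sub: "a ` ({1..n} - T) \<subseteq> carrier G" using a_carr by auto
  have "g x = \<one>\<^bsub>K\<^esub>" if "x \<in> a ` ({1..n} - T)" for x using that outside by auto
  then have "g y = \<one>\<^bsub>K\<^esub>" if "y \<in> normal_closure G (a ` ({1..n} - T))" for y
    using hom_one_on_normal_closure[OF grp K g sub _ that] by blast
  from FactGroup_hom_induced[OF grp kernel_GS_normal g K this]
  obtain g1 where g1: "g1 \<in> hom (GS G a n T) K" "\<And>x. x \<in> carrier G \<Longrightarrow> g1 (projS G a n T x) = g x"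
    unfolding GS_def projS_def by blast
  have zS: "zS G a n T \<in> carrier (GS G a n T)" "g1 (zS G a n T) = \<one>\<^bsub>K\<^esub>"
    using hom_in_carrier[OF projS_hom z_carrier] g1(2)[OF z_carrier] z by (simp_all add: zS_eq)
  then have "g1 y = \<one>\<^bsub>K\<^esub>" if "y \<in> generate (GS G a n T) {zS G a n T}" for y
    using hom_one_on_generate[OF GS_group K g1(1) _ _ that] by blast
  from FactGroup_hom_induced[OF GS_group kernel_barGS_normal g1(1) K this]
  obtain h where h: "h \<in> hom (barGS G a n T) K"
    "\<And>y. y \<in> carrier (GS G a n T) \<Longrightarrow> h (barprojS G a n T y) = g1 y"
    unfolding barGS_def barprojS_def by blast
  have "h (proj_bar T x) = g x" if "x \<in> carrier G" for x
    unfolding proj_bar_def using h(2) g1(2) hom_in_carrier[OF projS_hom] that by simp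
  with h(1) show ?thesis by (rule that)
qed

lemma kernel_barG_normal: "generate G {ordprod G a n} \<lhd> G"
  using normal_generate_central[OF grp z_carrier z_central] .

end

locale cokernel_setting = central_word G a n
  for G :: "('a, 'b) monoid_scheme" and a n +
  fixes m :: nat and S :: "nat \<Rightarrow> nat set"
  assumes a_gen: "generate G (a ` {1..n}) = carrier G"
    and S_sub: "\<forall>i\<in>{1..m}. S i \<subseteq> {1..n}"
    and G_ab: "abelian_basis (abelianization G) (\<lambda>j. ab_class G (a j)) {1..n}"
begin

sublocale product_cokernel G "{1..m}" "\<lambda>i. barGS G a n (S i)" "\<lambda>i. proj_bar (S i)"
  by (intro product_cokernel.intro) (auto simp: grp barGS_group proj_bar_hom proj_bar_surj)

lemma diag_z: "diag (ordprod G a n) = \<one>\<^bsub>abelianization P\<^esub>"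
proof -
  have "(\<lambda>i\<in>{1..m}. proj_bar (S i) (ordprod G a n)) = \<one>\<^bsub>P\<^esub>" by (simp add: proj_bar_z)
  then show ?thesis
    unfolding diag_def using hom_one[OF ab_class_hom[OF P_group] P_group comm_group.axioms(2)[OF abP_comm_group]]
    by simp
qed

lemma cokernel_eq_cok:
  "cokernel (abelianization (barG G a n)) (abelianization (barAprod G a n S m)) (rho_bar_ab G a n S m) = cok"
proof -
  have rho: "rho_bar_ab G a n S m = (\<lambda>D. diag (SOME x. x \<in> (SOME C. C \<in> D)))"
    unfolding rho_bar_ab_def rho_bar_def diag_def barAprod_def proj_bar_def ..
  have "diag x = \<one>\<^bsub>abelianization P\<^esub>" if "x \<in> generate G {ordprod G a n}" for x
    using hom_one_on_generate[OF grp comm_group.axioms(2)[OF abP_comm_group] diag_hom _ _ that]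
      z_carrier diag_z by blast
  then have "rho_bar_ab G a n S m ` carrier (abelianization (barG G a n)) = diag ` carrier G"
    unfolding rho barG_def
    by (rule image_via_representatives[OF grp kernel_barG_normal abP_comm_group diag_hom])
  then show ?thesis unfolding cokernel_def cok_def barAprod_def by (simp only:)
qed

definition edges :: "(nat \<times> nat) set" where
  "edges = {(i, j). i \<in> {1..m} \<and> j \<in> S i}"

definition edge_gen :: "nat \<times> nat \<Rightarrow> (nat \<Rightarrow> 'a set set) set set" where
  "edge_gen e = coord (fst e) (a (snd e))"

lemma finite_edges: "finite edges"
  by (rule finite_subset[of _ "{1..m} \<times> {1..n}"]) (use S_sub in \<open>auto simp: edges_def\<close>)

lemma edges_row: "i \<in> {1..m} \<Longrightarrow> {e\<in>edges. fst e = i} = Pair i ` S i"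
  by (auto simp: edges_def)

lemma edges_col: "{e\<in>edges. snd e = j} = (\<lambda>i. (i, j)) ` {i\<in>{1..m}. j \<in> S i}"
  by (auto simp: edges_def)

lemma coord_a_outside: "i \<in> {1..m} \<Longrightarrow> j \<in> {1..n} \<Longrightarrow> j \<notin> S i \<Longrightarrow> coord i (a j) = \<one>\<^bsub>cok\<^esub>"
  by (rule coord_eq_one) (auto simp: proj_bar_outside)

lemma edge_gen_carrier: "edge_gen ` edges \<subseteq> carrier cok"
proof
  fix y assume "y \<in> edge_gen ` edges"
  then obtain i j where "i \<in> {1..m}" "j \<in> S i" "y = coord i (a j)" by (auto simp: edges_def edge_gen_def)
  moreover have "a j \<in> carrier G" using \<open>i \<in> {1..m}\<close> \<open>j \<in> S i\<close> S_sub a_carr by blast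
  ultimately show "y \<in> carrier cok" using hom_in_carrier[OF coord_hom] by blast
qed

lemma edge_gen_rows: "finprod cok edge_gen {e\<in>edges. fst e = i} = \<one>\<^bsub>cok\<^esub>"
proof (cases "i \<in> {1..m}")
  case True
  interpret cok: comm_group cok by (rule cok_comm_group)
  have coord_a: "coord i \<circ> a \<in> {1..n} \<rightarrow> carrier cok" using hom_in_carrier[OF coord_hom[OF True]] a_carr by auto
  note row = edges_row[OF True]
  have "edge_gen \<in> Pair i ` S i \<rightarrow> carrier cok" using edge_gen_carrier row by blast
  then have "finprod cok edge_gen {e\<in>edges. fst e = i} = finprod cok (\<lambda>j. edge_gen (i, j)) (S i)"
    unfolding row by (rule cok.finprod_reindex) (simp add: inj_on_def)
  also have "\<dots> = finprod cok (coord i \<circ> a) (S i)" by (simp add: edge_gen_def o_def)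
  also have "\<dots> = finprod cok (coord i \<circ> a) {1..n}"
    using coord_a S_sub True coord_a_outside[OF True]
    by (intro cok.finprod_mono_neutral_cong_left) auto
  also have "\<dots> = ordprod cok (coord i \<circ> a) n"
    using coord_a by (intro ordprod_eq_finprod[symmetric] cok.comm_monoid_axioms) auto
  also have "\<dots> = coord i (ordprod G a n)"
    by (rule ordprod_hom[OF coord_hom[OF True] grp cok_group a_carr, symmetric])
  also have "\<dots> = \<one>\<^bsub>cok\<^esub>" by (rule coord_eq_one[OF True proj_bar_z])
  finally show ?thesis .
next
  case False
  then have "{e\<in>edges. fst e = i} = {}" by (auto simp: edges_def)
  then show ?thesis by (simp only: comm_monoid.finprod_empty[OF comm_group.axioms(1)[OF cok_comm_group]])
qed

lemma edge_gen_cols: "finprod cok edge_gen {e\<in>edges. snd e = j} = \<one>\<^bsub>cok\<^esub>"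
proof (cases "j \<in> {1..n}")
  case True
  interpret cok: comm_group cok by (rule cok_comm_group)
  have "a j \<in> carrier G" using a_carr True by blast
  then have coord_j: "(\<lambda>i. coord i (a j)) \<in> {1..m} \<rightarrow> carrier cok"
    using hom_in_carrier[OF coord_hom] by blast
  note col = edges_col[of j]
  have "edge_gen \<in> (\<lambda>i. (i, j)) ` {i\<in>{1..m}. j \<in> S i} \<rightarrow> carrier cok" using edge_gen_carrier col by blast
  then have "finprod cok edge_gen {e\<in>edges. snd e = j} = finprod cok (\<lambda>i. edge_gen (i, j)) {i\<in>{1..m}. j \<in> S i}"
    unfolding col by (rule cok.finprod_reindex) (simp add: inj_on_def)
  also have "\<dots> = finprod cok (\<lambda>i. coord i (a j)) {i\<in>{1..m}. j \<in> S i}" by (simp add: edge_gen_def)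
  also have "\<dots> = finprod cok (\<lambda>i. coord i (a j)) {1..m}"
    using coord_j coord_a_outside True by (intro cok.finprod_mono_neutral_cong_left) auto
  also have "\<dots> = \<one>\<^bsub>cok\<^esub>" by (rule finprod_coord[OF \<open>a j \<in> carrier G\<close>])
  finally show ?thesis .
next
  case False
  then have "{e\<in>edges. snd e = j} = {}" using S_sub unfolding edges_def by fastforce
  then show ?thesis by (simp only: comm_monoid.finprod_empty[OF comm_group.axioms(1)[OF cok_comm_group]])
qed

lemma edge_gen_generate: "generate cok (edge_gen ` edges) = carrier cok"
proof
  interpret cok: comm_group cok by (rule cok_comm_group)
  show "generate cok (edge_gen ` edges) \<subseteq> carrier cok" by (rule cok.generate_incl[OF edge_gen_carrier])
  have "coord i ` carrier G \<subseteq> generate cok (edge_gen ` edges)" if i: "i \<in> {1..m}" for i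
  proof -
    interpret coord: group_hom G cok "coord i"
      using grp cok_group coord_hom[OF i] by (simp add: group_hom_def group_hom_axioms_def)
    have "coord i ` a ` {1..n} \<subseteq> generate cok (edge_gen ` edges)"
    proof
      fix y assume "y \<in> coord i ` a ` {1..n}"
      then obtain j where j: "j \<in> {1..n}" "y = coord i (a j)" by blast
      show "y \<in> generate cok (edge_gen ` edges)"
      proof (cases "j \<in> S i")
        case True
        then have "y \<in> edge_gen ` edges" using i j by (force simp: edges_def edge_gen_def)
        then show ?thesis by (rule generate.incl)
      next
        case False
        then show ?thesis using coord_a_outside[OF i j(1)] j(2) by (simp add: generate.one)
      qed
    qed
    then have "generate cok (coord i ` a ` {1..n}) \<subseteq> generate cok (edge_gen ` edges)"
      by (intro cok.generate_subgroup_incl cok.generate_is_subgroup edge_gen_carrier)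
    then show ?thesis using coord.generate_img[OF a_carr] a_gen by simp
  qed
  then have "generate cok (\<Union>i\<in>{1..m}. coord i ` carrier G) \<subseteq> generate cok (edge_gen ` edges)"
    by (intro cok.generate_subgroup_incl cok.generate_is_subgroup edge_gen_carrier) blast
  then show "carrier cok \<subseteq> generate cok (edge_gen ` edges)" using carrier_cok_generate by blast
qed

lemma hom_int_prescribed:
  obtains f where "f \<in> hom G integer_group" "\<And>j. j \<in> {1..n} \<Longrightarrow> f (a j) = v j"
proof -
  obtain g where g: "g \<in> hom (abelianization G) integer_group"
    "\<And>j. j \<in> {1..n} \<Longrightarrow> g (ab_class G (a j)) = v j"
    using abelian_basis_hom_int[OF G_ab] by blast
  show ?thesis using that[of "g \<circ> ab_class G"] hom_compose[OF ab_class_hom[OF grp] g(1)] g(2) by simp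
qed

lemma hom_int_z: "f \<in> hom G integer_group \<Longrightarrow> f (ordprod G a n) = (\<Sum>j\<in>{1..n}. f (a j))"
  using ordprod_hom[OF _ grp group_integer_group a_carr]
    ordprod_eq_finprod[OF comm_group.axioms(1)[OF abelian_integer_group]]
  by (simp add: finprod_integer_group)

lemma hom_int_eq_zero:
  assumes f: "f \<in> hom G integer_group" and gens: "\<And>j. j \<in> {1..n} \<Longrightarrow> f (a j) = 0"
    and x: "x \<in> carrier G"
  shows "f x = 0"
proof -
  have "f y = \<one>\<^bsub>integer_group\<^esub>" if "y \<in> a ` {1..n}" for y using that gens by auto
  then show ?thesis using hom_one_on_generate[OF grp group_integer_group f a_carr _ x[folded a_gen]] by simp
qed

lemma barGS_hom_int_prescribed:
  assumes T: "T \<subseteq> {1..n}" and sum_zero: "(\<Sum>j\<in>T. v j) = 0"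
  obtains h where "h \<in> hom (barGS G a n T) integer_group" "\<And>j. j \<in> T \<Longrightarrow> h (proj_bar T (a j)) = v j"
proof -
  obtain f where f: "f \<in> hom G integer_group" "\<And>j. j \<in> {1..n} \<Longrightarrow> f (a j) = (if j \<in> T then v j else 0)"
    using hom_int_prescribed[of "\<lambda>j. if j \<in> T then v j else 0"] by blast
  have "{j\<in>{1..n}. j \<in> T} = T" using T by blast
  then have "f (ordprod G a n) = (\<Sum>j\<in>T. v j)"
    using hom_int_z[OF f(1)] f(2) by (simp add: sum.inter_filter[symmetric])
  then have z: "f (ordprod G a n) = \<one>\<^bsub>integer_group\<^esub>" using sum_zero by simp
  have outside: "f (a j) = \<one>\<^bsub>integer_group\<^esub>" if "j \<in> {1..n}" "j \<notin> T" for j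
    using f(2) that by simp
  obtain h where h: "h \<in> hom (barGS G a n T) integer_group"
    "\<And>x. x \<in> carrier G \<Longrightarrow> h (proj_bar T x) = f x"
    using barGS_hom_induced[OF group_integer_group f(1) outside z] by blast
  show ?thesis using that[OF h(1)] h(2) f(2) T a_carr by (simp add: subset_iff image_subset_iff)
qed

text \<open>The zero sum of the flow at \<open>i\<close> makes it a homomorphism on \<open>barGS G a n (S i)\<close>; the zero
  sums at the vertices \<open>j\<close> make the total of these homomorphisms vanish on the image of \<open>G\<close>.\<close>

lemma edge_gen_flows:
  assumes rows: "\<And>i. (\<Sum>e\<in>{e\<in>edges. fst e = i}. w e) = 0"
    and cols: "\<And>j. (\<Sum>e\<in>{e\<in>edges. snd e = j}. w e) = 0"
  shows "\<exists>om \<in> hom cok integer_group. \<forall>e\<in>edges. om (edge_gen e) = w e"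
proof -
  have "\<forall>i\<in>{1..m}. \<exists>h. h \<in> hom (barGS G a n (S i)) integer_group \<and>
      (\<forall>j\<in>S i. h (proj_bar (S i) (a j)) = w (i, j))"
  proof
    fix i assume i: "i \<in> {1..m}"
    have "(\<Sum>j\<in>S i. w (i, j)) = 0" using rows[of i] by (simp add: edges_row[OF i] sum.reindex inj_on_def)
    then obtain h where "h \<in> hom (barGS G a n (S i)) integer_group"
      "\<And>j. j \<in> S i \<Longrightarrow> h (proj_bar (S i) (a j)) = w (i, j)"
      using barGS_hom_int_prescribed[of "S i" "\<lambda>j. w (i, j)"] S_sub i by blast
    then show "\<exists>h. h \<in> hom (barGS G a n (S i)) integer_group \<and> (\<forall>j\<in>S i. h (proj_bar (S i) (a j)) = w (i, j))"
      by blast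
  qed
  from bchoice[OF this] obtain h
    where h: "\<And>i. i \<in> {1..m} \<Longrightarrow> h i \<in> hom (barGS G a n (S i)) integer_group"
      "\<And>i j. i \<in> {1..m} \<Longrightarrow> j \<in> S i \<Longrightarrow> h i (proj_bar (S i) (a j)) = w (i, j)"
    by blast
  have h_a: "h i (proj_bar (S i) (a j)) = (if j \<in> S i then w (i, j) else 0)"
    if "i \<in> {1..m}" "j \<in> {1..n}" for i j
    using h that proj_bar_outside hom_one[OF h(1) barGS_group group_integer_group] by auto
  have "(\<Sum>i\<in>{1..m}. (h i \<circ> proj_bar (S i)) x) = 0" if x: "x \<in> carrier G" for x
  proof (rule hom_int_eq_zero[OF sum_hom_integer_group[OF hom_compose[OF proj_bar_hom h(1)]] _ x])
    fix j assume j: "j \<in> {1..n}"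
    have "(\<Sum>i\<in>{1..m}. (h i \<circ> proj_bar (S i)) (a j)) = (\<Sum>i\<in>{1..m}. if j \<in> S i then w (i, j) else 0)"
      using h_a j by simp
    also have "\<dots> = (\<Sum>i\<in>{i\<in>{1..m}. j \<in> S i}. w (i, j))"
      by (rule sum.inter_filter[symmetric]) simp
    also have "\<dots> = 0" using cols[of j] by (simp add: edges_col sum.reindex inj_on_def)
    finally show "(\<Sum>i\<in>{1..m}. (h i \<circ> proj_bar (S i)) (a j)) = 0" .
  qed
  then have "(\<Sum>i\<in>{1..m}. h i (proj_bar (S i) x)) = 0" if "x \<in> carrier G" for x
    using that by simp
  then obtain om where om: "om \<in> hom cok integer_group"
    "\<And>i x. i \<in> {1..m} \<Longrightarrow> x \<in> carrier G \<Longrightarrow> om (coord i x) = h i (proj_bar (S i) x)"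
    using cok_hom_to_integers[OF h(1)] by blast
  have "om (edge_gen e) = w e" if e: "e \<in> edges" for e
  proof -
    obtain i j where ij: "e = (i, j)" "i \<in> {1..m}" "j \<in> S i" using e unfolding edges_def by blast
    then have "a j \<in> carrier G" using S_sub a_carr by blast
    then show ?thesis using om(2)[OF ij(2)] h(2)[OF ij(2,3)] ij(1) by (simp add: edge_gen_def)
  qed
  then show ?thesis using om(1) by blast
qed

theorem cok_free_abelian: "free_abelian cok"
  by (rule free_abelian_bipartite_presentation[OF cok_comm_group finite_edges edge_gen_carrier
        edge_gen_generate edge_gen_rows edge_gen_cols edge_gen_flows])

end

theorem mainTheorem14:
  fixes G :: "('a, 'b) monoid_scheme" and a :: "nat \<Rightarrow> 'a" and n m :: nat
    and S :: "nat \<Rightarrow> nat set"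
  assumes grp: "group G"
    and a_carr: "a ` {1..n} \<subseteq> carrier G"
    and a_gen: "generate G (a ` {1..n}) = carrier G"
    and z_central: "\<forall>g\<in>carrier G. ordprod G a n \<otimes>\<^bsub>G\<^esub> g = g \<otimes>\<^bsub>G\<^esub> ordprod G a n"
    and S_sub: "\<forall>i\<in>{1..m}. S i \<subseteq> {1..n}"
    and S_int: "\<forall>i\<in>{1..m}. \<forall>r\<in>{1..m}. i \<noteq> r \<longrightarrow> card (S i \<inter> S r) \<le> 1"
    and barGS_free: "\<forall>i\<in>{1..m}. free_group_of_rank (barGS G a n (S i)) (card (S i) - 1)"
    and barGS_basis: "\<forall>i\<in>{1..m}. \<forall>T. T \<subseteq> S i \<and> card T = card (S i) - 1 \<longrightarrow>
           free_basis (barGS G a n (S i)) (\<lambda>j. barprojS G a n (S i) (projS G a n (S i) (a j))) T"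
    and G_ab: "abelian_basis (abelianization G) (\<lambda>j. ab_class G (a j)) {1..n}"
    and A_ab: "abelian_basis (abelianization (Aprod G a n S m))
           (\<lambda>ij. ab_class (Aprod G a n S m) (aA G a n S m ij))
           {(i, j). i \<in> {1..m} \<and> j \<in> S i}"
  shows "free_abelian
           (cokernel (abelianization (barG G a n)) (abelianization (barAprod G a n S m))
              (rho_bar_ab G a n S m))"
proof -
  interpret cokernel_setting G a n m S
    by (intro cokernel_setting.intro central_word.intro cokernel_setting_axioms.intro
        grp a_carr z_central a_gen S_sub G_ab)
  show ?thesis unfolding cokernel_eq_cok by (rule cok_free_abelian)
qed

end
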